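(* Let $x,y\in\mathbb{Q}$. The linear map $K_{x,y}:\mathbf{H}_{\mathrm{Pack}_1}\to\mathbf{H}_\mathrm{Pack}$ defined by $K_{x,y}(1)=1$ and \[K_{x,y}((a_1\ \cdots\ a_n))=\sum_{\substack{M_1,\dots,M_n\in \mathrm{Pack}\\ \omega(M_i)=a_i}}\left(\prod_{i=1}^n H_{\mathrm{row}(M_i)}(x)\,H_{\mathrm{col}(M_i)}(y) \right) M_1\searrow \cdots \searrow M_n\] is a bialgebra morphism from $(\mathbf{H}_{\mathrm{Pack}_1},\rightarrow,\blacktriangle)$ to $(\mathbf{H}_\mathrm{Pack},\searrow,\blacktriangle)$.
   Context: A packed matrix is a matrix with entries in $\mathbb{N}$ with no zero row and no zero column (the empty matrix $1$, with $0$ rows and columns, is packed); $\mathrm{Pack}$ is their set and $\mathbf{H}_\mathrm{Pack}$ the $\mathbb{Q}$-vector space with basis $\mathrm{Pack}$. $\mathrm{row}(M)$, $\mathrm{col}(M)$ are the numbers of rows and columns, $\omega(M)$ the sum of entries. $\mathcal{M}_{k,l}(\mathbb{N})$ denotes $k\times l$ matrices over $\mathbb{N}$; $p(M)$ is obtained from $M$ by deleting zero rows and columns. On $\mathbf{H}_\mathrm{Pack}$: $M\searrow M'=\begin{pmatrix}M&0\\0&M'\end{pmatrix}$ and, for $M$ with $k$ rows and $l$ columns, $\blacktriangle(M)=\sum_{M',M''\in\mathcal{M}_{k,l}(\mathbb{N}),\ M'+M''=M}p(M')\otimes p(M'')$, $\blacktriangle(1)=1\otimes1$. $\mathbf{H}_{\mathrm{Pack}_1}$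 is the $\mathbb{Q}$-vector space with basis the packed row matrices $(a_1\ \cdots\ a_n)$, $a_i\geq1$, and $1$, with product concatenation $\rightarrow$ and coproduct $\blacktriangle(M)=\sum_{M',M''\in\mathcal{M}_{1,n}(\mathbb{N}),\ M'+M''=M}p(M')\otimes p(M'')$. $H_n(X)=X(X-1)\cdots(X-n+1)/n!$ is the $n$-th Hilbert polynomial ($H_0=1$). *)

theory Defs
  imports Complex_Main
begin

text \<open>Matrices over nat are represented as lists of rows. The empty list is the
empty matrix 1. Row matrices (a_1 ... a_n) are represented as [[a_1,...,a_n]].\<close>

type_synonym mat = "nat list list"

definition nrows :: "mat \<Rightarrow> nat" where
  "nrows M = length M"

definition ncols :: "mat \<Rightarrow> nat" where
  "ncols M = (if M = [] then 0 else length (hd M))"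

definition packed :: "mat \<Rightarrow> bool" where
  "packed M \<longleftrightarrow> (\<forall>r\<in>set M. length r = ncols M)
     \<and> (\<forall>r\<in>set M. \<exists>a\<in>set r. a \<noteq> 0)
     \<and> (\<forall>j<ncols M. \<exists>r\<in>set M. r ! j \<noteq> 0)"

definition weight :: "mat \<Rightarrow> nat" where
  "weight M = (\<Sum>r\<leftarrow>M. sum_list r)"

definition pk :: "mat \<Rightarrow> mat" where
  "pk M = map (\<lambda>r. map (\<lambda>j. r ! j) (filter (\<lambda>j. \<exists>r'\<in>set M. r' ! j \<noteq> 0) [0..<ncols M]))
              (filter (\<lambda>r. \<exists>a\<in>set r. a \<noteq> 0) M)"

definition diag :: "mat \<Rightarrow> mat \<Rightarrow> mat" where
  "diag M N = map (\<lambda>r. r @ replicate (ncols N) 0) M @ map (\<lambda>r. replicate (ncols M) 0 @ r) N"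

text \<open>Concatenation of packed row matrices (product of H_Pack1).\<close>
definition rconcat :: "mat \<Rightarrow> mat \<Rightarrow> mat" where
  "rconcat M N = (if M = [] then N else if N = [] then M else [hd M @ hd N])"

definition decomp :: "mat \<Rightarrow> (mat \<times> mat) set" where
  "decomp M = {(A, B). length A = nrows M \<and> length B = nrows M
      \<and> (\<forall>r\<in>set A. length r = ncols M) \<and> (\<forall>r\<in>set B. length r = ncols M)
      \<and> (\<forall>i<nrows M. \<forall>j<ncols M. A ! i ! j + B ! i ! j = M ! i ! j)}"

text \<open>Coefficient of p(M') \<otimes> p(M'') in the coproduct of the basis element M.\<close>
definition cop_basis :: "mat \<Rightarrow> mat \<times> mat \<Rightarrow> rat" where
  "cop_basis M PQ = of_nat (card {(A, B) \<in> decomp M. (pk A, pk B) = PQ})"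

definition packed_row :: "mat \<Rightarrow> bool" where
  "packed_row M \<longleftrightarrow> M = [] \<or> (\<exists>r. M = [r] \<and> r \<noteq> [] \<and> (\<forall>a\<in>set r. 1 \<le> a))"

definition hilb :: "nat \<Rightarrow> rat \<Rightarrow> rat" where
  "hilb n X = (\<Prod>i<n. X - of_nat i) / fact n"

text \<open>Vector spaces: finitely supported rational-valued functions on the basis.\<close>
definition supp :: "('a \<Rightarrow> rat) \<Rightarrow> 'a set" where
  "supp f = {x. f x \<noteq> 0}"

definition H_Pack :: "(mat \<Rightarrow> rat) set" where
  "H_Pack = {f. finite (supp f) \<and> (\<forall>M\<in>supp f. packed M)}"

definition H_Pack1 :: "(mat \<Rightarrow> rat) set" where
  "H_Pack1 = {f. finite (supp f) \<and> (\<forall>M\<in>supp f. packed_row M)}"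

definition unit_el :: "mat \<Rightarrow> rat" where
  "unit_el N = (if N = [] then 1 else 0)"

definition lin :: "('a \<Rightarrow> 'b \<Rightarrow> rat) \<Rightarrow> ('a \<Rightarrow> rat) \<Rightarrow> 'b \<Rightarrow> rat" where
  "lin g f = (\<lambda>N. \<Sum>M\<in>supp f. f M * g M N)"

definition bilin :: "(mat \<Rightarrow> mat \<Rightarrow> mat) \<Rightarrow> (mat \<Rightarrow> rat) \<Rightarrow> (mat \<Rightarrow> rat) \<Rightarrow> mat \<Rightarrow> rat" where
  "bilin m f g = (\<lambda>N. \<Sum>M1\<in>supp f. \<Sum>M2\<in>supp g. if m M1 M2 = N then f M1 * g M2 else 0)"

definition coprod :: "(mat \<Rightarrow> rat) \<Rightarrow> (mat \<times> mat \<Rightarrow> rat)" where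
  "coprod = lin cop_basis"

definition counit :: "(mat \<Rightarrow> rat) \<Rightarrow> rat" where
  "counit f = f []"

definition tensor_map :: "(mat \<Rightarrow> mat \<Rightarrow> rat) \<Rightarrow> (mat \<times> mat \<Rightarrow> rat) \<Rightarrow> mat \<times> mat \<Rightarrow> rat" where
  "tensor_map g = lin (\<lambda>(M1, M2) (P, Q). g M1 P * g M2 Q)"

definition K_row :: "rat \<Rightarrow> rat \<Rightarrow> nat list \<Rightarrow> mat \<Rightarrow> rat" where
  "K_row x y as N = (\<Sum>Ms\<in>{Ms. length Ms = length as \<and>
        (\<forall>i<length as. packed (Ms ! i) \<and> weight (Ms ! i) = as ! i)}.
      if foldr diag Ms [] = N
      then (\<Prod>i<length as. hilb (nrows (Ms ! i)) x * hilb (ncols (Ms ! i)) y) else 0)"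

definition K_basis :: "rat \<Rightarrow> rat \<Rightarrow> mat \<Rightarrow> mat \<Rightarrow> rat" where
  "K_basis x y R = (if R = [] then unit_el else K_row x y (hd R))"

definition K :: "rat \<Rightarrow> rat \<Rightarrow> (mat \<Rightarrow> rat) \<Rightarrow> (mat \<Rightarrow> rat)" where
  "K x y = lin (K_basis x y)"

end

theory Submission
  imports Defs "HOL-Computational_Algebra.Formal_Power_Series"
begin

text \<open>
  K sends a word to the block diagonal sum of its letters, a letter a becoming the sum of all
  packed matrices of weight a with weight H_row(x) H_col(y); the sum over the whole word is thus
  a product under block diagonal sum, and multiplicativity of K is immediate. For the coproduct,
  the decompositions M' + M'' of a block diagonal matrix are exactly the pairs of decompositions
  of its blocks, so the coproduct is multiplicative for the block diagonal sum and, by induction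
  on the word, it suffices to treat a single letter. There, a decomposition of M with
  p(M') = P and p(M'') = Q is determined by the size k\<times>l of M and the sets of nonzero rows and
  columns of M' and M'', which cover {0,...,k-1} and {0,...,l-1} with prescribed cardinalities.
  Counting these coverings turns the claim into the identity
  H_p H_q = sum over k of (k choose p) (p choose p+q-k) H_k, a form of Vandermonde's identity.
\<close>

section \<open>Block diagonal sums and packed matrices\<close>

definition rect :: "mat \<Rightarrow> bool" where
  "rect M \<longleftrightarrow> (\<forall>r\<in>set M. length r = ncols M)"

definition diags :: "mat list \<Rightarrow> mat" where
  "diags Ms = foldr diag Ms []"

definition packed_wt :: "nat \<Rightarrow> mat set" where
  "packed_wt a = {M. packed M \<and> weight M = a}"

lemma sum_fibres:
  fixes c F :: "_ \<Rightarrow> 'a::comm_semiring_0"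
  assumes "finite S" "\<And>z. z \<in> Z \<Longrightarrow> t z \<in> S"
  shows "(\<Sum>w\<in>S. c w * (\<Sum>z\<in>Z. if t z = w then F z else 0)) = (\<Sum>z\<in>Z. c (t z) * F z)"
proof -
  have "(\<Sum>w\<in>S. c w * (\<Sum>z\<in>Z. if t z = w then F z else 0))
      = (\<Sum>z\<in>Z. \<Sum>w\<in>S. if t z = w then c w * F z else 0)"
    by (simp add: sum_distrib_left if_distrib sum.swap[of _ S] cong: if_cong)
  also have "\<dots> = (\<Sum>z\<in>Z. c (t z) * F z)"
    using assms by (intro sum.cong refl) (simp add: sum.delta)
  finally show ?thesis .
qed

lemma sum_product_Times:
  "(\<Sum>p\<in>A. f p) * (\<Sum>q\<in>B. g q) = (\<Sum>r\<in>A \<times> B. f (fst r) * g (snd r) :: 'a::comm_semiring_0)"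
  by (simp add: sum_product sum.cartesian_product split_def)

lemma diags_Nil[simp]: "diags [] = []" and diags_Cons[simp]: "diags (M#Ms) = diag M (diags Ms)"
  by (simp_all add: diags_def)

lemma ncols_Nil[simp]: "ncols [] = 0" by (simp add: ncols_def)
lemma nrows_Nil[simp]: "nrows [] = 0" by (simp add: nrows_def)

lemma diag_Nil1[simp]: "diag [] N = N"
  by (simp add: diag_def)

lemma diag_Nil2[simp]: "diag M [] = M"
  by (simp add: diag_def)

lemma ncols_diag: "ncols (diag M N) = ncols M + ncols N"
  by (cases M; cases N) (auto simp: diag_def ncols_def)

lemma nrows_diag: "nrows (diag M N) = nrows M + nrows N"
  by (simp add: diag_def nrows_def)

lemma length_diag[simp]: "length (diag M N) = length M + length N"
  by (simp add: diag_def)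

lemma diag_assoc: "diag (diag A B) C = diag A (diag B C)"
  unfolding diag_def[of "diag A B" C] diag_def[of A "diag B C"] ncols_diag
  unfolding diag_def by (simp add: replicate_add)

lemma diags_append: "diags (Ms1 @ Ms2) = diag (diags Ms1) (diags Ms2)"
  by (induction Ms1) (auto simp: diag_assoc)

lemma weight_diag: "weight (diag M N) = weight M + weight N"
  by (simp add: diag_def weight_def comp_def sum_list_replicate)

lemma weight_Nil[simp]: "weight [] = 0" by (simp add: weight_def)

lemma packed_Nil[simp]: "packed []"
  by (simp add: packed_def)

lemma packed_diag:
  assumes "packed M" "packed N" shows "packed (diag M N)"
proof -
  have rM: "\<forall>r\<in>set M. length r = ncols M" and rN: "\<forall>r\<in>set N. length r = ncols N"
    using assms by (auto simp: packed_def)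
  have rows: "\<forall>r\<in>set (diag M N). length r = ncols (diag M N)"
    unfolding ncols_diag using rM rN by (auto simp: diag_def)
  have nonzero_rows: "\<forall>r\<in>set (diag M N). \<exists>a\<in>set r. a \<noteq> 0"
    using assms by (auto simp: diag_def packed_def; blast)
  have nonzero_cols: "\<exists>r\<in>set (diag M N). r ! j \<noteq> 0" if "j < ncols (diag M N)" for j
  proof (cases "j < ncols M")
    case True
    then obtain r where "r \<in> set M" "r ! j \<noteq> 0" using assms(1) by (auto simp: packed_def)
    then show ?thesis using rM True
      by (auto simp: diag_def nth_append intro!: bexI[of _ "r @ replicate (ncols N) 0"])
  next
    case False
    then have "j - ncols M < ncols N" using that by (simp add: ncols_diag)
    then obtain r where "r \<in> set N" "r ! (j - ncols M) \<noteq> 0" using assms(2) by (auto simp: packed_def)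
    then show ?thesis using False
      by (auto simp: diag_def nth_append intro!: bexI[of _ "replicate (ncols M) 0 @ r"])
  qed
  show ?thesis using rows nonzero_rows nonzero_cols by (simp add: packed_def)
qed

lemma diag_in_packed_wt: "M \<in> packed_wt a \<Longrightarrow> N \<in> packed_wt b \<Longrightarrow> diag M N \<in> packed_wt (a + b)"
  by (simp add: packed_wt_def packed_diag weight_diag)

lemma packed_diags: "\<forall>M\<in>set Ms. packed M \<Longrightarrow> packed (diags Ms)"
  by (induction Ms) (auto intro: packed_diag)

lemma weight_diags: "weight (diags Ms) = (\<Sum>M\<leftarrow>Ms. weight M)"
  by (induction Ms) (auto simp: weight_diag)

lemma sum_list_ge_length: "(\<forall>r\<in>set M. (1::nat) \<le> f r) \<Longrightarrow> length M \<le> (\<Sum>r\<leftarrow>M. f r)"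
  by (induction M) auto

lemma sum_list_pos: "\<exists>a\<in>set r. a \<noteq> 0 \<Longrightarrow> 1 \<le> sum_list (r::nat list)"
  using member_le_sum_list by fastforce

lemma weight_cols: "\<forall>r\<in>set M. length r = l \<Longrightarrow> weight M = (\<Sum>j<l. \<Sum>r\<leftarrow>M. r!j)"
proof (induction M)
  case Nil then show ?case by (simp add: weight_def)
next
  case (Cons r M)
  have "sum_list r = (\<Sum>j<l. r!j)" using Cons.prems
    by (simp add: sum_list_sum_nth atLeast0LessThan)
  then show ?case using Cons by (simp add: weight_def sum.distrib)
qed

lemma packed_bounds:
  assumes "packed M"
  shows "nrows M \<le> weight M" "ncols M \<le> weight M" "\<forall>r\<in>set M. \<forall>a\<in>set r. a \<le> weight M"
proof -
  show "nrows M \<le> weight M" unfolding nrows_def weight_def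
    using assms by (intro sum_list_ge_length) (auto simp: packed_def intro!: sum_list_pos[simplified])
  have "(\<Sum>j<ncols M. (1::nat)) \<le> (\<Sum>j<ncols M. \<Sum>r\<leftarrow>M. r!j)"
  proof (rule sum_mono)
    fix j assume "j \<in> {..<ncols M}"
    then obtain r where r: "r \<in> set M" "r!j \<noteq> 0" using assms by (auto simp: packed_def)
    then have "r!j \<le> (\<Sum>r\<leftarrow>M. r!j)" by (intro member_le_sum_list) auto
    then show "1 \<le> (\<Sum>r\<leftarrow>M. r!j)" using r by linarith
  qed
  then show "ncols M \<le> weight M"
    using assms weight_cols[of M "ncols M"] by (simp add: packed_def)
  show "\<forall>r\<in>set M. \<forall>a\<in>set r. a \<le> weight M"
  proof (intro ballI)
    fix r a assume "r \<in> set M" "a \<in> set r"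
    then have "a \<le> sum_list r" "sum_list r \<le> weight M"
      by (auto simp: weight_def intro!: member_le_sum_list)
    then show "a \<le> weight M" by linarith
  qed
qed

lemma finite_packed_weight_le: "finite {M. packed M \<and> weight M \<le> W}"
proof -
  let ?R = "{r. set r \<subseteq> {..W} \<and> length r \<le> W}"
  have "finite ?R" by (rule finite_lists_length_le) simp
  then have "finite {M. set M \<subseteq> ?R \<and> length M \<le> W}" by (rule finite_lists_length_le)
  moreover have "{M. packed M \<and> weight M \<le> W} \<subseteq> {M. set M \<subseteq> ?R \<and> length M \<le> W}"
  proof
    fix M assume "M \<in> {M. packed M \<and> weight M \<le> W}"
    then have p: "packed M" and w: "weight M \<le> W" by auto
    have "\<forall>r\<in>set M. length r = ncols M" using p by (simp add: packed_def)
    then show "M \<in> {M. set M \<subseteq> ?R \<and> length M \<le> W}"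
      using packed_bounds[OF p] w by (fastforce simp: nrows_def)
  qed
  ultimately show ?thesis by (rule finite_subset[rotated])
qed

lemma finite_packed_wt: "finite (packed_wt a)"
  by (rule finite_subset[OF _ finite_packed_weight_le[of a]]) (auto simp: packed_wt_def)

lemma packed_wt_0: "packed_wt 0 = {[]}"
proof -
  have "M = []" if "packed M" "weight M = 0" for M
  proof (rule ccontr)
    assume "M \<noteq> []"
    then obtain r where "r \<in> set M" by (cases M) auto
    then have "1 \<le> sum_list r" using that(1) by (auto simp: packed_def intro!: sum_list_pos[simplified])
    moreover have "sum_list r \<le> weight M" using \<open>r \<in> set M\<close> by (auto simp: weight_def intro!: member_le_sum_list)
    ultimately show False using that(2) by simp
  qed
  then show ?thesis by (auto simp: packed_wt_def)
qed

definition hilb_mat :: "rat \<Rightarrow> rat \<Rightarrow> mat \<Rightarrow> rat" where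
  "hilb_mat x y M = hilb (nrows M) x * hilb (ncols M) y"

definition hilb_prod :: "rat \<Rightarrow> rat \<Rightarrow> mat list \<Rightarrow> rat" where
  "hilb_prod x y Ms = prod_list (map (hilb_mat x y) Ms)"

definition tuples :: "nat list \<Rightarrow> mat list set" where
  "tuples as = {Ms. length Ms = length as \<and> (\<forall>i<length as. packed (Ms!i) \<and> weight (Ms!i) = as!i)}"

lemma hilb_mat_Nil[simp]: "hilb_mat x y [] = 1"
  by (simp add: hilb_mat_def hilb_def)

lemma hilb_prod_append: "hilb_prod x y (Ms1 @ Ms2) = hilb_prod x y Ms1 * hilb_prod x y Ms2"
  by (simp add: hilb_prod_def)

lemma tuples_single: "tuples [a] = (\<lambda>M. [M]) ` packed_wt a"
  by (auto simp: tuples_def packed_wt_def length_Suc_conv)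

lemma tuples_append: "tuples (as @ bs) = (\<lambda>(Ms1, Ms2). Ms1 @ Ms2) ` (tuples as \<times> tuples bs)"
proof (intro set_eqI iffI)
  fix Ms assume Ms: "Ms \<in> tuples (as @ bs)"
  have "take (length as) Ms \<in> tuples as" "drop (length as) Ms \<in> tuples bs"
    using Ms by (auto simp: tuples_def nth_append)
  then show "Ms \<in> (\<lambda>(Ms1, Ms2). Ms1 @ Ms2) ` (tuples as \<times> tuples bs)"
    by (intro image_eqI[of _ _ "(take (length as) Ms, drop (length as) Ms)"]) auto
next
  fix Ms assume "Ms \<in> (\<lambda>(Ms1, Ms2). Ms1 @ Ms2) ` (tuples as \<times> tuples bs)"
  then show "Ms \<in> tuples (as @ bs)" by (auto simp: tuples_def nth_append)
qed

lemma inj_on_append_tuples: "inj_on (\<lambda>(Ms1, Ms2). Ms1 @ Ms2) (tuples as \<times> tuples bs)"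
  by (auto simp: inj_on_def tuples_def)

lemma diags_tuples: "Ms \<in> tuples as \<Longrightarrow> diags Ms \<in> packed_wt (sum_list as)"
proof -
  assume Ms: "Ms \<in> tuples as"
  then have "map weight Ms = as" by (auto simp: tuples_def intro: nth_equalityI)
  moreover have "\<forall>M\<in>set Ms. packed M" using Ms by (auto simp: tuples_def in_set_conv_nth)
  ultimately show ?thesis by (auto simp: packed_wt_def packed_diags weight_diags)
qed

lemma prod_nth_eq_prod_list: "length Ms = n \<Longrightarrow> (\<Prod>i<n. f (Ms!i)) = prod_list (map f Ms)"
proof (induction Ms arbitrary: n)
  case Nil then show ?case by simp
next
  case (Cons M Ms) then show ?case by (auto simp del: prod.lessThan_Suc simp add: prod.lessThan_Suc_shift)
qed

lemma K_row_eq_tuples: "K_row x y as N = (\<Sum>Ms\<in>tuples as. if diags Ms = N then hilb_prod x y Ms else 0)"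
  unfolding K_row_def tuples_def[symmetric] diags_def[symmetric] hilb_prod_def hilb_mat_def[symmetric]
  by (intro sum.cong refl) (auto simp: tuples_def prod_nth_eq_prod_list)

lemma K_row_support: "K_row x y as N \<noteq> 0 \<Longrightarrow> N \<in> packed_wt (sum_list as)"
proof -
  assume "K_row x y as N \<noteq> 0"
  then obtain Ms where "Ms \<in> tuples as" "(if diags Ms = N then hilb_prod x y Ms else 0) \<noteq> 0"
    unfolding K_row_eq_tuples by (rule sum.not_neutral_contains_not_neutral)
  then show ?thesis using diags_tuples by (auto split: if_splits)
qed

lemma K_row_Nil: "K_row x y [] = unit_el"
  by (auto simp: K_row_eq_tuples tuples_def unit_el_def hilb_prod_def)

lemma K_row_single: "K_row x y [a] N = (if N \<in> packed_wt a then hilb_mat x y N else 0)"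
  unfolding K_row_eq_tuples tuples_single
  by (subst sum.reindex) (auto simp: inj_on_def hilb_prod_def sum.delta' finite_packed_wt)

lemma K_row_append:
  assumes "finite T1" "finite T2" "packed_wt (sum_list as) \<subseteq> T1" "packed_wt (sum_list bs) \<subseteq> T2"
  shows "K_row x y (as @ bs) N =
    (\<Sum>N1\<in>T1. \<Sum>N2\<in>T2. if diag N1 N2 = N then K_row x y as N1 * K_row x y bs N2 else 0)"
proof -
  let ?Z = "tuples as \<times> tuples bs"
  let ?t = "\<lambda>z. (diags (fst z), diags (snd z))"
  let ?F = "\<lambda>z. hilb_prod x y (fst z) * hilb_prod x y (snd z)"
  have prod: "K_row x y as (fst w) * K_row x y bs (snd w) = (\<Sum>z\<in>?Z. if ?t z = w then ?F z else 0)" for w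
    unfolding K_row_eq_tuples sum_product sum.cartesian_product by (intro sum.cong) auto
  have "(\<Sum>N1\<in>T1. \<Sum>N2\<in>T2. if diag N1 N2 = N then K_row x y as N1 * K_row x y bs N2 else 0)
      = (\<Sum>w\<in>T1 \<times> T2. (if diag (fst w) (snd w) = N then 1 else 0) *
           (K_row x y as (fst w) * K_row x y bs (snd w)))"
    by (simp add: sum.cartesian_product split_def) (intro sum.cong refl, simp)
  also have "\<dots> = (\<Sum>w\<in>T1 \<times> T2. (if diag (fst w) (snd w) = N then 1 else 0) *
           (\<Sum>z\<in>?Z. if ?t z = w then ?F z else 0))"
    by (simp only: prod)
  also have "\<dots> = (\<Sum>z\<in>?Z. (if diag (diags (fst z)) (diags (snd z)) = N then 1 else 0) * ?F z)"
    using assms diags_tuples by (subst sum_fibres) auto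
  also have "\<dots> = K_row x y (as @ bs) N"
    unfolding K_row_eq_tuples tuples_append sum.reindex[OF inj_on_append_tuples]
    by (simp add: diags_append split_def) (intro sum.cong refl, simp add: hilb_prod_append)
  finally show ?thesis ..
qed

lemma K_row_Cons: "K_row x y (a#as) N =
   (\<Sum>M\<in>packed_wt a. \<Sum>N'\<in>packed_wt (sum_list as). if diag M N' = N then hilb_mat x y M * K_row x y as N' else 0)"
  using K_row_append[of "packed_wt a" "packed_wt (sum_list as)" "[a]" as x y N]
  by (simp add: finite_packed_wt K_row_single cong: if_cong)

lemma K_row_Cons_0: "K_row x y (0#as) = K_row x y as"
proof
  fix N
  have "K_row x y (0#as) N = (\<Sum>N'\<in>packed_wt (sum_list as). if N' = N then K_row x y as N' else 0)"
    unfolding K_row_Cons packed_wt_0 by (simp cong: if_cong)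
  also have "\<dots> = K_row x y as N"
    using finite_packed_wt K_row_support[of x y as N] by (auto simp: sum.delta')
  finally show "K_row x y (0#as) N = K_row x y as N" .
qed

lemma K_row_filter_nonzero: "K_row x y (filter (\<lambda>a. a \<noteq> 0) as) = K_row x y as"
proof (induction as)
  case (Cons a as)
  have "sum_list (filter (\<lambda>a. a \<noteq> 0) as) = sum_list as"
    by (induction as) auto
  then show ?case
    using Cons by (cases "a = 0") (simp_all add: K_row_Cons_0, auto simp: K_row_Cons fun_eq_iff cong: if_cong)
qed simp

section \<open>Rectangular matrices and deletion of zero rows and columns\<close>

definition mat_of :: "nat \<Rightarrow> nat \<Rightarrow> (nat \<Rightarrow> nat \<Rightarrow> nat) \<Rightarrow> mat" where
  "mat_of k l f = map (\<lambda>i. map (f i) [0..<l]) [0..<k]"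

text \<open>k\<times>l matrices; the condition on ncols forces l = 0 when k = 0, as for the empty matrix.\<close>
definition shape :: "nat \<Rightarrow> nat \<Rightarrow> mat \<Rightarrow> bool" where
  "shape k l A \<longleftrightarrow> length A = k \<and> (\<forall>r\<in>set A. length r = l) \<and> ncols A = l"

lemma mat_of_nth[simp]: "i < k \<Longrightarrow> j < l \<Longrightarrow> mat_of k l f ! i ! j = f i j"
  by (simp add: mat_of_def)

lemma shape_mat_of: "(k = 0 \<Longrightarrow> l = 0) \<Longrightarrow> shape k l (mat_of k l f)"
  by (cases k) (auto simp: shape_def mat_of_def ncols_def hd_map simp del: upt_Suc)

lemma shape_nth: "shape k l A \<Longrightarrow> i < k \<Longrightarrow> length (A!i) = l"
  by (auto simp: shape_def)

lemma shape_eqI: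
  assumes "shape k l A" "shape k l B" "\<And>i j. i < k \<Longrightarrow> j < l \<Longrightarrow> A!i!j = B!i!j"
  shows "A = B"
proof (rule nth_equalityI)
  show "length A = length B" using assms by (simp add: shape_def)
  fix i assume "i < length A"
  then have i: "i < k" using assms by (simp add: shape_def)
  show "A!i = B!i"
    by (rule nth_equalityI) (use assms i shape_nth in auto)
qed

lemma rect_shape: "rect A \<longleftrightarrow> shape (length A) (ncols A) A"
  by (simp add: rect_def shape_def)

lemma shape_rect: "shape k l A \<Longrightarrow> rect A"
  by (auto simp: rect_def shape_def)

lemma shape_packed: "packed M \<Longrightarrow> shape (nrows M) (ncols M) M"
  by (simp add: packed_def shape_def nrows_def)

lemma weight_shape: "shape k l A \<Longrightarrow> weight A = (\<Sum>i<k. \<Sum>j<l. A!i!j)"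
  by (auto simp: shape_def weight_def sum_list_sum_nth atLeast0LessThan intro!: sum.cong)

definition pos :: "nat list \<Rightarrow> nat \<Rightarrow> nat" where
  "pos xs x = (THE r. r < length xs \<and> xs!r = x)"

lemma pos_nth: "distinct xs \<Longrightarrow> r < length xs \<Longrightarrow> pos xs (xs!r) = r"
  unfolding pos_def by (rule the_equality) (auto simp: nth_eq_iff_index_eq)

lemma nth_pos: "distinct xs \<Longrightarrow> x \<in> set xs \<Longrightarrow> pos xs x < length xs \<and> xs ! pos xs x = x"
  by (metis in_set_conv_nth pos_nth)

definition nz_rows :: "mat \<Rightarrow> nat set" where
  "nz_rows A = {i. i < length A \<and> (\<exists>j<ncols A. A!i!j \<noteq> 0)}"

definition nz_cols :: "mat \<Rightarrow> nat set" where
  "nz_cols A = {j. j < ncols A \<and> (\<exists>i<length A. A!i!j \<noteq> 0)}"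

definition nz_row_list :: "mat \<Rightarrow> nat list" where
  "nz_row_list A = filter (\<lambda>i. i \<in> nz_rows A) [0..<length A]"

definition nz_col_list :: "mat \<Rightarrow> nat list" where
  "nz_col_list A = filter (\<lambda>j. j \<in> nz_cols A) [0..<ncols A]"

lemma set_nz_row_list: "set (nz_row_list A) = nz_rows A" by (auto simp: nz_row_list_def nz_rows_def)
lemma set_nz_col_list: "set (nz_col_list A) = nz_cols A" by (auto simp: nz_col_list_def nz_cols_def)
lemma distinct_nz_row_list: "distinct (nz_row_list A)" by (simp add: nz_row_list_def)
lemma distinct_nz_col_list: "distinct (nz_col_list A)" by (simp add: nz_col_list_def)
lemma length_nz_row_list: "length (nz_row_list A) = card (nz_rows A)"
  using distinct_card[OF distinct_nz_row_list, of A] by (simp add: set_nz_row_list)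
lemma length_nz_col_list: "length (nz_col_list A) = card (nz_cols A)"
  using distinct_card[OF distinct_nz_col_list, of A] by (simp add: set_nz_col_list)

lemma filter_nth_map: "filter P xs = map (nth xs) (filter (\<lambda>i. P (xs!i)) [0..<length xs])"
proof -
  have "filter P xs = filter P (map (nth xs) [0..<length xs])" by (simp add: map_nth)
  also have "\<dots> = map (nth xs) (filter (\<lambda>i. P (xs!i)) [0..<length xs])"
    by (simp add: filter_map comp_def)
  finally show ?thesis .
qed

lemma pk_alt:
  assumes "rect A"
  shows "pk A = map (\<lambda>i. map (\<lambda>j. A!i!j) (nz_col_list A)) (nz_row_list A)"
proof -
  have r: "length (A!i) = ncols A" if "i < length A" for i
    using assms that by (auto simp: rect_def)
  have rows: "filter (\<lambda>r. \<exists>a\<in>set r. a \<noteq> 0) A = map (nth A) (nz_row_list A)"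
    unfolding nz_row_list_def apply (subst filter_nth_map)
  proof (rule arg_cong[where f = "map (nth A)"], rule filter_cong[OF refl])
    fix i assume "i \<in> set [0..<length A]"
    then have i: "i < length A" by simp
    show "(\<exists>a\<in>set (A!i). a \<noteq> 0) = (i \<in> nz_rows A)"
      unfolding nz_rows_def using i r[OF i] by (auto simp: in_set_conv_nth) (metis nth_mem)
  qed
  have cols: "filter (\<lambda>j. \<exists>r'\<in>set A. r' ! j \<noteq> 0) [0..<ncols A] = nz_col_list A"
    unfolding nz_col_list_def
  proof (rule filter_cong[OF refl])
    fix j assume "j \<in> set [0..<ncols A]"
    then have j: "j < ncols A" by simp
    show "(\<exists>r'\<in>set A. r' ! j \<noteq> 0) = (j \<in> nz_cols A)"
      unfolding nz_cols_def using j by (auto simp: in_set_conv_nth) (metis nth_mem)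
  qed
  show ?thesis unfolding pk_def rows cols by simp
qed

lemma pk_nth:
  assumes "rect A" "r < length (nz_row_list A)" "c < length (nz_col_list A)"
  shows "pk A ! r ! c = A ! (nz_row_list A ! r) ! (nz_col_list A ! c)"
  using assms by (simp add: pk_alt)

lemma nz_rows_empty: "rect A \<Longrightarrow> nz_rows A = {} \<Longrightarrow> nz_cols A = {}"
  by (auto simp: nz_rows_def nz_cols_def)

lemma packed_pk:
  assumes "rect A" shows "packed (pk A)"
proof -
  let ?R = "nz_row_list A" and ?C = "nz_col_list A"
  have pk: "pk A = map (\<lambda>i. map (\<lambda>j. A!i!j) ?C) ?R" by (rule pk_alt[OF assms])
  have nc: "ncols (pk A) = (if ?R = [] then 0 else length ?C)"
    unfolding pk by (cases ?R) (auto simp: ncols_def)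
  have 1: "\<forall>r\<in>set (pk A). length r = ncols (pk A)"
    unfolding nc by (auto simp: pk)
  have 2: "\<forall>r\<in>set (pk A). \<exists>a\<in>set r. a \<noteq> 0"
  proof
    fix r assume "r \<in> set (pk A)"
    then obtain i where i: "i \<in> nz_rows A" "r = map (\<lambda>j. A!i!j) ?C" by (auto simp: pk set_nz_row_list)
    then obtain j where j: "j < ncols A" "A!i!j \<noteq> 0" and il: "i < length A" by (auto simp: nz_rows_def)
    then have "j \<in> set ?C" by (auto simp: set_nz_col_list nz_cols_def)
    then show "\<exists>a\<in>set r. a \<noteq> 0" using i j by auto
  qed
  have 3: "\<exists>r\<in>set (pk A). r ! c \<noteq> 0" if c: "c < ncols (pk A)" for c
  proof -
    have ne: "?R \<noteq> []" and cC: "c < length ?C" using c by (auto simp: nc split: if_splits)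
    have "?C ! c \<in> nz_cols A" using cC nth_mem set_nz_col_list by metis
    then obtain i where i: "i < length A" "A!i!(?C!c) \<noteq> 0" by (auto simp: nz_cols_def)
    then have "i \<in> set ?R" using \<open>?C ! c \<in> nz_cols A\<close> by (auto simp: set_nz_row_list nz_rows_def nz_cols_def)
    then show ?thesis using i cC by (auto simp: pk intro!: bexI[of _ "map (\<lambda>j. A!i!j) ?C"])
  qed
  show ?thesis using 1 2 3 by (simp add: packed_def)
qed

lemma ncols_pk: "rect A \<Longrightarrow> ncols (pk A) = card (nz_cols A)"
proof -
  assume r: "rect A"
  show ?thesis
  proof (cases "nz_row_list A = []")
    case True
    then have "nz_rows A = {}" using set_nz_row_list by (metis set_empty)
    then show ?thesis using nz_rows_empty[OF r] True by (simp add: pk_alt[OF r])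
  next
    case False
    then show ?thesis by (cases "nz_row_list A") (auto simp: pk_alt[OF r] ncols_def length_nz_col_list)
  qed
qed

lemma nrows_pk: "rect A \<Longrightarrow> nrows (pk A) = card (nz_rows A)"
  by (simp add: pk_alt nrows_def length_nz_row_list)

lemma weight_pk:
  assumes "rect A" shows "weight (pk A) = weight A"
proof -
  let ?k = "length A" and ?l = "ncols A"
  have "weight (pk A) = (\<Sum>i\<in>nz_rows A. \<Sum>j\<in>nz_cols A. A!i!j)"
    unfolding pk_alt[OF assms] weight_def
    by (simp add: comp_def sum_list_distinct_conv_sum_set distinct_nz_row_list distinct_nz_col_list set_nz_row_list set_nz_col_list)
  also have "\<dots> = (\<Sum>i\<in>nz_rows A. \<Sum>j<?l. A!i!j)"
  proof (rule sum.cong[OF refl], rule sum.mono_neutral_left)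
    fix i assume "i \<in> nz_rows A"
    then have i: "i < ?k" by (simp add: nz_rows_def)
    show "\<forall>j\<in>{..<?l} - nz_cols A. A!i!j = 0" using i by (auto simp: nz_cols_def)
  qed (auto simp: nz_cols_def)
  also have "\<dots> = (\<Sum>i<?k. \<Sum>j<?l. A!i!j)"
    by (rule sum.mono_neutral_left) (auto simp: nz_rows_def)
  also have "\<dots> = weight A"
    using weight_shape[of ?k ?l A] assms by (simp add: rect_shape)
  finally show ?thesis .
qed

lemma shape_pk: "rect A \<Longrightarrow> shape (card (nz_rows A)) (card (nz_cols A)) (pk A)"
  using packed_pk shape_packed ncols_pk nrows_pk by metis

section \<open>Decompositions of block diagonal matrices\<close>

definition diag_entry :: "nat \<Rightarrow> nat \<Rightarrow> mat \<Rightarrow> mat \<Rightarrow> nat \<Rightarrow> nat \<Rightarrow> nat" where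
  "diag_entry k1 l1 A1 A2 i j = (if i < k1 then (if j < l1 then A1!i!j else 0)
     else (if j < l1 then 0 else A2!(i-k1)!(j-l1)))"

lemma shape_diag: "shape k1 l1 A1 \<Longrightarrow> shape k2 l2 A2 \<Longrightarrow> shape (k1+k2) (l1+l2) (diag A1 A2)"
  unfolding shape_def ncols_diag by (auto simp: diag_def)

lemma diag_nth:
  assumes "shape k1 l1 A1" "shape k2 l2 A2" "i < k1+k2" "j < l1+l2"
  shows "diag A1 A2 ! i ! j = diag_entry k1 l1 A1 A2 i j"
proof (cases "i < k1")
  case True
  then have "diag A1 A2 ! i = A1!i @ replicate l2 0" "length (A1!i) = l1"
    using assms by (auto simp: diag_def nth_append shape_def)
  then show ?thesis using True assms by (simp add: diag_entry_def nth_append)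
next
  case False
  then have "diag A1 A2 ! i = replicate l1 0 @ A2!(i-k1)"
    using assms by (simp add: diag_def nth_append shape_def)
  then show ?thesis using False assms by (simp add: diag_entry_def nth_append)
qed

lemma nz_rows_diag1:
  assumes "shape k1 l1 A1" "shape k2 l2 A2" "i < k1"
  shows "i \<in> nz_rows (diag A1 A2) \<longleftrightarrow> i \<in> nz_rows A1"
proof -
  have l: "length A1 = k1" "length A2 = k2" "ncols A1 = l1" "ncols A2 = l2" using assms by (auto simp: shape_def)
  have "(\<exists>j<l1+l2. diag_entry k1 l1 A1 A2 i j \<noteq> 0) \<longleftrightarrow> (\<exists>j<l1. A1!i!j \<noteq> 0)"
    using assms(3) by (auto simp: diag_entry_def)
  then show ?thesis using assms diag_nth[OF assms(1,2)]
    by (auto simp: nz_rows_def ncols_diag l)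
qed

lemma nz_rows_diag2:
  assumes "shape k1 l1 A1" "shape k2 l2 A2" "i < k2"
  shows "i + k1 \<in> nz_rows (diag A1 A2) \<longleftrightarrow> i \<in> nz_rows A2"
proof -
  have l: "length A1 = k1" "length A2 = k2" "ncols A1 = l1" "ncols A2 = l2" using assms by (auto simp: shape_def)
  have "(\<exists>j<l1+l2. diag_entry k1 l1 A1 A2 (i+k1) j \<noteq> 0) \<longleftrightarrow> (\<exists>j<l2. A2!i!j \<noteq> 0)"
  proof
    assume "\<exists>j<l1+l2. diag_entry k1 l1 A1 A2 (i+k1) j \<noteq> 0"
    then obtain j where "j < l1+l2" "diag_entry k1 l1 A1 A2 (i+k1) j \<noteq> 0" by blast
    then show "\<exists>j<l2. A2!i!j \<noteq> 0" by (intro exI[of _ "j - l1"]) (auto simp: diag_entry_def split: if_splits)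
  next
    assume "\<exists>j<l2. A2!i!j \<noteq> 0"
    then obtain j where "j < l2" "A2!i!j \<noteq> 0" by blast
    then show "\<exists>j<l1+l2. diag_entry k1 l1 A1 A2 (i+k1) j \<noteq> 0" by (intro exI[of _ "j + l1"]) (auto simp: diag_entry_def)
  qed
  then show ?thesis using assms diag_nth[OF assms(1,2)]
    by (auto simp: nz_rows_def ncols_diag l)
qed

lemma nz_cols_diag1:
  assumes "shape k1 l1 A1" "shape k2 l2 A2" "j < l1"
  shows "j \<in> nz_cols (diag A1 A2) \<longleftrightarrow> j \<in> nz_cols A1"
proof -
  have l: "length A1 = k1" "length A2 = k2" "ncols A1 = l1" "ncols A2 = l2" using assms by (auto simp: shape_def)
  have "(\<exists>i<k1+k2. diag_entry k1 l1 A1 A2 i j \<noteq> 0) \<longleftrightarrow> (\<exists>i<k1. A1!i!j \<noteq> 0)"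
    using assms(3) by (auto simp: diag_entry_def)
  then show ?thesis using assms diag_nth[OF assms(1,2)]
    by (auto simp: nz_cols_def ncols_diag l)
qed

lemma nz_cols_diag2:
  assumes "shape k1 l1 A1" "shape k2 l2 A2" "j < l2"
  shows "j + l1 \<in> nz_cols (diag A1 A2) \<longleftrightarrow> j \<in> nz_cols A2"
proof -
  have l: "length A1 = k1" "length A2 = k2" "ncols A1 = l1" "ncols A2 = l2" using assms by (auto simp: shape_def)
  have "(\<exists>i<k1+k2. diag_entry k1 l1 A1 A2 i (j+l1) \<noteq> 0) \<longleftrightarrow> (\<exists>i<k2. A2!i!j \<noteq> 0)"
  proof
    assume "\<exists>i<k1+k2. diag_entry k1 l1 A1 A2 i (j+l1) \<noteq> 0"
    then obtain i where "i < k1+k2" "diag_entry k1 l1 A1 A2 i (j+l1) \<noteq> 0" by blast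
    then show "\<exists>i<k2. A2!i!j \<noteq> 0" by (intro exI[of _ "i - k1"]) (auto simp: diag_entry_def split: if_splits)
  next
    assume "\<exists>i<k2. A2!i!j \<noteq> 0"
    then obtain i where "i < k2" "A2!i!j \<noteq> 0" by blast
    then show "\<exists>i<k1+k2. diag_entry k1 l1 A1 A2 i (j+l1) \<noteq> 0" by (intro exI[of _ "i + k1"]) (auto simp: diag_entry_def)
  qed
  then show ?thesis using assms diag_nth[OF assms(1,2)]
    by (auto simp: nz_cols_def ncols_diag l)
qed

lemma filter_split:
  "filter P [0..<a+b] = filter P [0..<a] @ map (\<lambda>i. i + a) (filter (\<lambda>i. P (i + a)) [0..<b])"
proof -
  have "[0..<a+b] = [0..<a] @ [a..<a+b]" by (rule upt_add_eq_append) simp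
  moreover have "[a..<a+b] = map (\<lambda>i. i + a) [0..<b]" by (simp add: map_add_upt add.commute)
  ultimately show ?thesis by (simp add: filter_map comp_def)
qed

lemma nz_row_list_diag:
  assumes "shape k1 l1 A1" "shape k2 l2 A2"
  shows "nz_row_list (diag A1 A2) = nz_row_list A1 @ map (\<lambda>i. i + k1) (nz_row_list A2)"
proof -
  have l: "length A1 = k1" "length A2 = k2" "ncols A1 = l1" "ncols A2 = l2" using assms by (auto simp: shape_def)
  have "nz_row_list (diag A1 A2) = filter (\<lambda>i. i \<in> nz_rows (diag A1 A2)) [0..<k1] @
      map (\<lambda>i. i + k1) (filter (\<lambda>i. i + k1 \<in> nz_rows (diag A1 A2)) [0..<k2])"
    unfolding nz_row_list_def length_diag l by (rule filter_split)
  also have "\<dots> = nz_row_list A1 @ map (\<lambda>i. i + k1) (nz_row_list A2)"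
    unfolding nz_row_list_def l using nz_rows_diag1[OF assms] nz_rows_diag2[OF assms]
    by (intro arg_cong2[where f = "(@)"] arg_cong[where f = "map _"] filter_cong) auto
  finally show ?thesis .
qed

lemma nz_col_list_diag:
  assumes "shape k1 l1 A1" "shape k2 l2 A2"
  shows "nz_col_list (diag A1 A2) = nz_col_list A1 @ map (\<lambda>j. j + l1) (nz_col_list A2)"
proof -
  have l: "ncols A1 = l1" "ncols A2 = l2" using assms by (auto simp: shape_def)
  have "nz_col_list (diag A1 A2) = filter (\<lambda>j. j \<in> nz_cols (diag A1 A2)) [0..<l1] @
      map (\<lambda>j. j + l1) (filter (\<lambda>j. j + l1 \<in> nz_cols (diag A1 A2)) [0..<l2])"
    unfolding nz_col_list_def ncols_diag l by (rule filter_split)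
  also have "\<dots> = nz_col_list A1 @ map (\<lambda>j. j + l1) (nz_col_list A2)"
    unfolding nz_col_list_def l using nz_cols_diag1[OF assms] nz_cols_diag2[OF assms]
    by (intro arg_cong2[where f = "(@)"] arg_cong[where f = "map _"] filter_cong) auto
  finally show ?thesis .
qed

lemma pk_diag:
  assumes a: "shape k1 l1 A1" "shape k2 l2 A2"
  shows "pk (diag A1 A2) = diag (pk A1) (pk A2)"
proof -
  let ?R1 = "nz_row_list A1" and ?R2 = "nz_row_list A2"
  let ?C1 = "nz_col_list A1" and ?C2 = "nz_col_list A2"
  have r: "rect A1" "rect A2" "rect (diag A1 A2)" using a shape_diag shape_rect by blast+
  have R: "nz_row_list (diag A1 A2) = ?R1 @ map (\<lambda>i. i + k1) ?R2"
    and C: "nz_col_list (diag A1 A2) = ?C1 @ map (\<lambda>j. j + l1) ?C2"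
    using nz_row_list_diag[OF a] nz_col_list_diag[OF a] .
  have bounds: "\<forall>i\<in>set ?R1. i < k1" "\<forall>i\<in>set ?R2. i < k2" "\<forall>j\<in>set ?C1. j < l1" "\<forall>j\<in>set ?C2. j < l2"
    using a by (auto simp: set_nz_row_list set_nz_col_list nz_rows_def nz_cols_def shape_def)
  have s: "shape (length ?R1) (length ?C1) (pk A1)" "shape (length ?R2) (length ?C2) (pk A2)"
    using shape_pk[OF r(1)] shape_pk[OF r(2)] by (simp_all add: length_nz_row_list length_nz_col_list)
  show ?thesis
  proof (rule shape_eqI)
    show "shape (length ?R1 + length ?R2) (length ?C1 + length ?C2) (pk (diag A1 A2))"
      using shape_pk[OF r(3)] R C by (simp add: length_nz_row_list[symmetric] length_nz_col_list[symmetric])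
    show "shape (length ?R1 + length ?R2) (length ?C1 + length ?C2) (diag (pk A1) (pk A2))"
      by (rule shape_diag[OF s])
    fix i j assume i: "i < length ?R1 + length ?R2" and j: "j < length ?C1 + length ?C2"
    let ?i = "(?R1 @ map (\<lambda>i. i + k1) ?R2) ! i" and ?j = "(?C1 @ map (\<lambda>j. j + l1) ?C2) ! j"
    have ij: "?i < k1 + k2" "?j < l1 + l2"
      using i j bounds by (auto simp: nth_append dest!: nth_mem)
    have "pk (diag A1 A2) ! i ! j = diag A1 A2 ! ?i ! ?j"
      using pk_nth[OF r(3)] i j by (simp add: R C)
    also have "\<dots> = diag_entry k1 l1 A1 A2 ?i ?j" by (rule diag_nth[OF a ij])
    also have "\<dots> = diag_entry (length ?R1) (length ?C1) (pk A1) (pk A2) i j"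
      using i j bounds by (auto simp: diag_entry_def nth_append pk_nth[OF r(1)] pk_nth[OF r(2)] dest!: nth_mem)
    also have "\<dots> = diag (pk A1) (pk A2) ! i ! j" using diag_nth[OF s i j] by simp
    finally show "pk (diag A1 A2) ! i ! j = diag (pk A1) (pk A2) ! i ! j" .
  qed
qed

lemma decomp_iff: "(A,B) \<in> decomp M \<longleftrightarrow> shape (nrows M) (ncols M) A \<and> shape (nrows M) (ncols M) B \<and>
   (\<forall>i<nrows M. \<forall>j<ncols M. A!i!j + B!i!j = M!i!j)"
  by (cases M) (auto simp: decomp_def shape_def nrows_def ncols_def)

lemma diag_inj:
  assumes "shape k1 l1 A1" "shape k2 l2 A2" "shape k1 l1 A1'" "shape k2 l2 A2'"
    and "diag A1 A2 = diag A1' A2'"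
  shows "A1 = A1'" "A2 = A2'"
proof -
  have e: "diag_entry k1 l1 A1 A2 i j = diag_entry k1 l1 A1' A2' i j" if "i < k1 + k2" "j < l1 + l2" for i j
    using diag_nth[OF assms(1,2) that] diag_nth[OF assms(3,4) that] assms(5) by simp
  show "A1 = A1'"
  proof (rule shape_eqI[OF assms(1,3)])
    fix i j assume "i < k1" "j < l1"
    then show "A1!i!j = A1'!i!j" using e[of i j] by (simp add: diag_entry_def)
  qed
  show "A2 = A2'"
  proof (rule shape_eqI[OF assms(2,4)])
    fix i j assume "i < k2" "j < l2"
    then show "A2!i!j = A2'!i!j" using e[of "i+k1" "j+l1"] by (simp add: diag_entry_def)
  qed
qed

lemma finite_shape_bounded: "finite {A. shape k l A \<and> (\<forall>r\<in>set A. \<forall>a\<in>set r. a \<le> b)}"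
proof -
  let ?R = "{r. set r \<subseteq> {..b} \<and> length r = l}"
  have "finite ?R" by (rule finite_lists_length_eq) simp
  then have "finite {A. set A \<subseteq> ?R \<and> length A = k}" by (rule finite_lists_length_eq)
  then show ?thesis by (rule finite_subset[rotated]) (auto simp: shape_def)
qed

lemma finite_decomp: "finite (decomp M)"
proof -
  define b where "b = (\<Sum>p\<in>{..<nrows M}\<times>{..<ncols M}. M!fst p!snd p)"
  let ?S = "{A. shape (nrows M) (ncols M) A \<and> (\<forall>r\<in>set A. \<forall>a\<in>set r. a \<le> b)}"
  have entry_le: "M!i!j \<le> b" if "i < nrows M" "j < ncols M" for i j
    unfolding b_def using that
    by (intro member_le_sum[where f = "\<lambda>p. M!fst p!snd p" and i = "(i,j)", simplified]) auto
  have bounded: "A \<in> ?S" if s: "shape (nrows M) (ncols M) A"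
    and le: "\<forall>i<nrows M. \<forall>j<ncols M. A!i!j \<le> M!i!j" for A
  proof -
    have "a \<le> b" if "r \<in> set A" "a \<in> set r" for r a
    proof -
      obtain i where i: "i < nrows M" "r = A!i" using \<open>r \<in> set A\<close> s by (auto simp: shape_def in_set_conv_nth)
      have "length r = ncols M" using s i by (simp add: shape_nth)
      then obtain j where j: "j < ncols M" "a = r!j" using \<open>a \<in> set r\<close> by (auto simp: in_set_conv_nth)
      show "a \<le> b" using le entry_le i j by (metis order_trans)
    qed
    then show ?thesis using s by blast
  qed
  have "decomp M \<subseteq> ?S \<times> ?S"
  proof
    fix z assume "z \<in> decomp M"
    moreover obtain A B where z: "z = (A, B)" by fastforce
    ultimately have s: "shape (nrows M) (ncols M) A" "shape (nrows M) (ncols M) B"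
      and e: "\<forall>i<nrows M. \<forall>j<ncols M. A!i!j + B!i!j = M!i!j" by (auto simp: decomp_iff)
    have "\<forall>i<nrows M. \<forall>j<ncols M. A!i!j \<le> M!i!j" "\<forall>i<nrows M. \<forall>j<ncols M. B!i!j \<le> M!i!j"
      using e by (metis le_add1, metis le_add2)
    then have "A \<in> ?S" "B \<in> ?S" using bounded[OF s(1)] bounded[OF s(2)] by blast+
    then show "z \<in> ?S \<times> ?S" unfolding z by (rule SigmaI)
  qed
  then show ?thesis by (rule finite_subset) (intro finite_cartesian_product finite_shape_bounded)
qed

lemma cop_basis_eq_sum: "cop_basis M w = (\<Sum>z\<in>decomp M. if (pk (fst z), pk (snd z)) = w then 1 else 0)"
proof -
  have "{(A, B) \<in> decomp M. (pk A, pk B) = w} = {z \<in> decomp M. (pk (fst z), pk (snd z)) = w}"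
    by auto
  then show ?thesis unfolding cop_basis_def using finite_decomp[of M]
    by (simp add: sum.If_cases Int_def conj_commute)
qed

definition diag_pair :: "(mat \<times> mat) \<times> (mat \<times> mat) \<Rightarrow> mat \<times> mat" where
  "diag_pair z = (diag (fst (fst z)) (fst (snd z)), diag (snd (fst z)) (snd (snd z)))"

lemma diag_pair_in_decomp:
  assumes "z1 \<in> decomp M" "z2 \<in> decomp N" "packed M" "packed N"
  shows "diag_pair (z1, z2) \<in> decomp (diag M N)"
proof -
  obtain A1 B1 A2 B2 where z: "z1 = (A1, B1)" "z2 = (A2, B2)" by fastforce
  let ?k1 = "nrows M" and ?l1 = "ncols M" and ?k2 = "nrows N" and ?l2 = "ncols N"
  have s: "shape ?k1 ?l1 A1" "shape ?k1 ?l1 B1" "shape ?k2 ?l2 A2" "shape ?k2 ?l2 B2"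
    and e1: "\<forall>i<?k1. \<forall>j<?l1. A1!i!j + B1!i!j = M!i!j" and e2: "\<forall>i<?k2. \<forall>j<?l2. A2!i!j + B2!i!j = N!i!j"
    using assms by (auto simp: z decomp_iff)
  have "\<forall>i<?k1+?k2. \<forall>j<?l1+?l2. diag_entry ?k1 ?l1 A1 A2 i j + diag_entry ?k1 ?l1 B1 B2 i j
      = diag_entry ?k1 ?l1 M N i j"
    using e1 e2 by (auto simp: diag_entry_def)
  then show ?thesis
    using shape_diag[OF s(1,3)] shape_diag[OF s(2,4)] diag_nth[OF s(1,3)] diag_nth[OF s(2,4)]
      diag_nth[OF shape_packed shape_packed, OF assms(3,4)]
    by (simp add: diag_pair_def z decomp_iff nrows_diag ncols_diag)
qed

lemma decomp_diag_split:
  assumes "(A, B) \<in> decomp (diag M N)" "packed M" "packed N"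
  shows "\<exists>z\<in>decomp M \<times> decomp N. (A, B) = diag_pair z"
proof -
  let ?k1 = "nrows M" and ?l1 = "ncols M" and ?k2 = "nrows N" and ?l2 = "ncols N"
  have sM: "shape ?k1 ?l1 M" and sN: "shape ?k2 ?l2 N" using assms(2,3) shape_packed by auto
  have kl: "?k1 = 0 \<Longrightarrow> ?l1 = 0" "?k2 = 0 \<Longrightarrow> ?l2 = 0" using sM sN by (auto simp: shape_def)
  have sA: "shape (?k1+?k2) (?l1+?l2) A" and sB: "shape (?k1+?k2) (?l1+?l2) B"
    and eAB: "\<forall>i<?k1+?k2. \<forall>j<?l1+?l2. A!i!j + B!i!j = diag_entry ?k1 ?l1 M N i j"
    using assms(1) diag_nth[OF sM sN] by (auto simp: decomp_iff nrows_diag ncols_diag)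
  define A1 where "A1 = mat_of ?k1 ?l1 (\<lambda>i j. A!i!j)"
  define B1 where "B1 = mat_of ?k1 ?l1 (\<lambda>i j. B!i!j)"
  define A2 where "A2 = mat_of ?k2 ?l2 (\<lambda>i j. A!(i+?k1)!(j+?l1))"
  define B2 where "B2 = mat_of ?k2 ?l2 (\<lambda>i j. B!(i+?k1)!(j+?l1))"
  have s: "shape ?k1 ?l1 A1" "shape ?k1 ?l1 B1" "shape ?k2 ?l2 A2" "shape ?k2 ?l2 B2"
    unfolding A1_def B1_def A2_def B2_def using kl by (simp_all add: shape_mat_of)
  have "(A1,B1) \<in> decomp M" unfolding decomp_iff using s eAB by (auto simp: A1_def B1_def diag_entry_def)
  moreover have "(A2,B2) \<in> decomp N" unfolding decomp_iff using s eAB by (auto simp: A2_def B2_def diag_entry_def)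
  moreover have blocks: "A!i!j = diag_entry ?k1 ?l1 A1 A2 i j \<and> B!i!j = diag_entry ?k1 ?l1 B1 B2 i j"
    if "i < ?k1+?k2" "j < ?l1+?l2" for i j
    using eAB[rule_format, OF that] that
    by (cases "i < ?k1"; cases "j < ?l1") (simp_all add: diag_entry_def A1_def A2_def B1_def B2_def)
  have "diag A1 A2 = A"
    by (rule shape_eqI[OF shape_diag[OF s(1,3)] sA]) (simp add: diag_nth[OF s(1,3)] blocks)
  moreover have "diag B1 B2 = B"
    by (rule shape_eqI[OF shape_diag[OF s(2,4)] sB]) (simp add: diag_nth[OF s(2,4)] blocks)
  ultimately show ?thesis by (intro bexI[of _ "((A1,B1),(A2,B2))"]) (auto simp: diag_pair_def)
qed

lemma bij_betw_decomp_diag: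
  assumes "packed M" "packed N"
  shows "bij_betw diag_pair (decomp M \<times> decomp N) (decomp (diag M N))"
proof (rule bij_betwI')
  fix z z' assume z: "z \<in> decomp M \<times> decomp N" and z': "z' \<in> decomp M \<times> decomp N"
  obtain A1 B1 A2 B2 A1' B1' A2' B2' where zz: "z = ((A1, B1), (A2, B2))" "z' = ((A1', B1'), (A2', B2'))"
    by (metis prod.collapse)
  have "shape (nrows M) (ncols M) C" if "C \<in> {A1, B1, A1', B1'}" for C
    using z z' that by (auto simp: zz decomp_iff)
  moreover have "shape (nrows N) (ncols N) C" if "C \<in> {A2, B2, A2', B2'}" for C
    using z z' that by (auto simp: zz decomp_iff)
  ultimately show "(diag_pair z = diag_pair z') = (z = z')"
    using diag_inj[of "nrows M" "ncols M" A1 "nrows N" "ncols N" A2 A1' A2']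
      diag_inj[of "nrows M" "ncols M" B1 "nrows N" "ncols N" B2 B1' B2']
    by (auto simp: zz diag_pair_def)
next
  fix z assume "z \<in> decomp M \<times> decomp N"
  then show "diag_pair z \<in> decomp (diag M N)" using diag_pair_in_decomp assms by (cases z) auto
next
  fix w assume "w \<in> decomp (diag M N)"
  then show "\<exists>z\<in>decomp M \<times> decomp N. w = diag_pair z" using decomp_diag_split assms by (cases w) auto
qed

lemma cop_basis_diag:
  assumes pM: "packed M" and pN: "packed N"
  shows "cop_basis (diag M N) w = (\<Sum>z\<in>decomp M \<times> decomp N.
    if (diag (pk (fst (fst z))) (pk (fst (snd z))), diag (pk (snd (fst z))) (pk (snd (snd z)))) = w then 1 else 0)"
proof -
  have "cop_basis (diag M N) w = (\<Sum>z\<in>decomp M \<times> decomp N.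
      if (pk (fst (diag_pair z)), pk (snd (diag_pair z))) = w then 1 else 0)"
    unfolding cop_basis_eq_sum by (rule sum.reindex_bij_betw[OF bij_betw_decomp_diag[OF pM pN], symmetric])
  also have "\<dots> = (\<Sum>z\<in>decomp M \<times> decomp N.
    if (diag (pk (fst (fst z))) (pk (fst (snd z))), diag (pk (snd (fst z))) (pk (snd (snd z)))) = w then 1 else 0)"
  proof (intro sum.cong refl)
    fix z assume "z \<in> decomp M \<times> decomp N"
    then have s: "shape (nrows M) (ncols M) (fst (fst z))" "shape (nrows M) (ncols M) (snd (fst z))"
      "shape (nrows N) (ncols N) (fst (snd z))" "shape (nrows N) (ncols N) (snd (snd z))"
      using decomp_iff[of "fst (fst z)" "snd (fst z)" M] decomp_iff[of "fst (snd z)" "snd (snd z)" N] by auto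
    show "(if (pk (fst (diag_pair z)), pk (snd (diag_pair z))) = w then 1 else 0) =
      (if (diag (pk (fst (fst z))) (pk (fst (snd z))), diag (pk (snd (fst z))) (pk (snd (snd z)))) = w
       then 1 else (0::rat))"
      by (simp add: diag_pair_def pk_diag[OF s(1,3)] pk_diag[OF s(2,4)])
  qed
  finally show ?thesis .
qed

lemma decomp_Nil: "decomp [] = {([],[])}"
  by (auto simp: decomp_def)

definition packed_upto :: "nat \<Rightarrow> mat set" where
  "packed_upto W = {X. packed X \<and> weight X \<le> W}"

lemma finite_packed_upto: "finite (packed_upto W)"
  unfolding packed_upto_def by (rule finite_packed_weight_le)

lemma weight_decomp:
  assumes "packed M" "(A,B) \<in> decomp M"
  shows "weight A + weight B = weight M"
proof -
  have s: "shape (nrows M) (ncols M) A" "shape (nrows M) (ncols M) B"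
    and e: "\<forall>i<nrows M. \<forall>j<ncols M. A!i!j + B!i!j = M!i!j"
    using assms(2) decomp_iff by auto
  show ?thesis
    unfolding weight_shape[OF s(1)] weight_shape[OF s(2)] weight_shape[OF shape_packed[OF assms(1)]]
    using e by (simp add: sum.distrib[symmetric])
qed

lemma pk_decomp_packed_upto:
  assumes "packed M" "weight M \<le> W" "z \<in> decomp M"
  shows "pk (fst z) \<in> packed_upto W \<and> pk (snd z) \<in> packed_upto W"
proof -
  have s: "shape (nrows M) (ncols M) (fst z)" "shape (nrows M) (ncols M) (snd z)"
    using assms(3) decomp_iff[of "fst z" "snd z" M] by auto
  have w: "weight (fst z) + weight (snd z) = weight M"
    using weight_decomp[OF assms(1), of "fst z" "snd z"] assms(3) by simp
  show ?thesis using s w assms(2)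
    by (auto simp: packed_upto_def packed_pk weight_pk shape_rect)
qed

definition packed_quads :: "nat \<Rightarrow> ((mat \<times> mat) \<times> (mat \<times> mat)) set" where
  "packed_quads W = (packed_upto W \<times> packed_upto W) \<times> (packed_upto W \<times> packed_upto W)"

definition diag_indicator :: "mat \<Rightarrow> mat \<Rightarrow> (mat \<times> mat) \<times> (mat \<times> mat) \<Rightarrow> rat" where
  "diag_indicator P Q q =
    (if diag (fst (fst q)) (fst (snd q)) = P \<and> diag (snd (fst q)) (snd (snd q)) = Q then 1 else 0)"

lemma cop_basis_diag_indicator:
  assumes pM: "packed M" and pN: "packed N" and wM: "weight M \<le> W" and wN: "weight N \<le> W"
  shows "cop_basis (diag M N) (P,Q) =
    (\<Sum>q\<in>packed_quads W. diag_indicator P Q q * (cop_basis M (fst q) * cop_basis N (snd q)))"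
proof -
  let ?pp = "\<lambda>z::mat\<times>mat. (pk (fst z), pk (snd z))"
  let ?t = "\<lambda>z::(mat\<times>mat)\<times>(mat\<times>mat). (?pp (fst z), ?pp (snd z))"
  have prod: "cop_basis M (fst q) * cop_basis N (snd q) =
      (\<Sum>z\<in>decomp M \<times> decomp N. if ?t z = q then 1 else 0)" for q
    unfolding cop_basis_eq_sum sum_product sum.cartesian_product
    by (intro sum.cong refl) (auto simp: prod_eq_iff)
  have "(\<Sum>q\<in>packed_quads W. diag_indicator P Q q * (cop_basis M (fst q) * cop_basis N (snd q)))
      = (\<Sum>z\<in>decomp M \<times> decomp N. diag_indicator P Q (?t z) * 1)"
    unfolding prod packed_quads_def
    by (rule sum_fibres)
      (use pk_decomp_packed_upto[OF pM wM] pk_decomp_packed_upto[OF pN wN] in \<open>auto simp: finite_packed_upto\<close>)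
  also have "\<dots> = cop_basis (diag M N) (P,Q)"
    unfolding cop_basis_diag[OF pM pN] by (intro sum.cong refl) (simp add: diag_indicator_def)
  finally show ?thesis ..
qed

section \<open>Hilbert polynomials and coverings\<close>

lemma hilb_gchoose: "hilb n X = X gchoose n"
  by (simp add: hilb_def gbinomial_prod_rev atLeast0LessThan)

lemma hilb_product_expansion: "(\<Sum>k\<le>p+q. hilb k X * of_nat ((k choose p) * (p choose (p+q-k)))) = hilb p X * hilb q X"
proof -
  define f where "f k = hilb k X * of_nat ((k choose p) * (p choose (p+q-k)))" for k
  have "hilb p X * hilb q X = (X gchoose p) * (\<Sum>m\<in>{0..q}. (of_nat p gchoose m) * ((X - of_nat p) gchoose (q - m)))"
    using gbinomial_Vandermonde[of "of_nat p" "X - of_nat p" q] by (simp add: hilb_gchoose)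
  also have "\<dots> = (\<Sum>m\<in>{0..q}. of_nat (p choose m) * ((X gchoose p) * ((X - of_nat p) gchoose (q - m))))"
    by (simp add: sum_distrib_left binomial_gbinomial mult_ac)
  also have "\<dots> = (\<Sum>m\<in>{0..q}. of_nat (p choose m) * ((X gchoose (p+q-m)) * (of_nat (p+q-m) gchoose p)))"
  proof (intro sum.cong refl)
    fix m assume "m \<in> {0..q}"
    then have "p \<le> p + q - m" "p + q - m - p = q - m" by auto
    then show "of_nat (p choose m) * ((X gchoose p) * ((X - of_nat p) gchoose (q - m))) =
        of_nat (p choose m) * ((X gchoose (p+q-m)) * (of_nat (p+q-m) gchoose p))"
      using gbinomial_trinomial_revision[of p "p+q-m" X] by simp
  qed
  also have "\<dots> = (\<Sum>m\<in>{0..q}. f (p + q - m))"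
  proof (intro sum.cong refl)
    fix m assume "m \<in> {0..q}"
    then have e: "p + q - (p + q - m) = m" by simp
    show "of_nat (p choose m) * ((X gchoose (p+q-m)) * (of_nat (p+q-m) gchoose p)) = f (p + q - m)"
      unfolding f_def e of_nat_mult binomial_gbinomial hilb_gchoose by (simp only: ac_simps)
  qed
  also have "\<dots> = (\<Sum>i\<in>{0..q}. f (i + p))"
    by (subst sum.atLeastAtMost_rev) (intro sum.cong refl, simp add: add.commute)
  also have "\<dots> = (\<Sum>k\<in>{0+p..q+p}. f k)"
    by (rule sum.shift_bounds_cl_nat_ivl[symmetric])
  also have "\<dots> = (\<Sum>k\<in>{..<p}. f k) + (\<Sum>k\<in>{p..p+q}. f k)"
  proof -
    have z: "(\<Sum>k\<in>{..<p}. f k) = 0" by (rule sum.neutral) (simp add: f_def binomial_eq_0)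
    show ?thesis by (simp only: z add.commute add_0)
  qed
  also have "\<dots> = (\<Sum>k\<in>{..<p} \<union> {p..p+q}. f k)"
    by (rule sum.union_disjoint[symmetric]) auto
  also have "{..<p} \<union> {p..p+q} = {..p+q}" by auto
  finally show ?thesis by (simp add: f_def)
qed

definition covers :: "nat \<Rightarrow> nat \<Rightarrow> nat \<Rightarrow> (nat set \<times> nat set) set" where
  "covers p q k = {(R1,R2). R1 \<union> R2 = {..<k} \<and> card R1 = p \<and> card R2 = q}"

lemma finite_covers: "finite (covers p q k)"
  by (rule finite_subset[of _ "Pow {..<k} \<times> Pow {..<k}"]) (auto simp: covers_def)

lemma card_covering_sets:
  assumes I: "finite I" and sub: "R1 \<subseteq> I" and cR: "card R1 = p" and le: "card I \<le> p + q"
  shows "card {R2. R1 \<union> R2 = I \<and> card R2 = q} = p choose (p + q - card I)"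
proof -
  let ?k = "card I" and ?E = "{E. E \<subseteq> R1 \<and> card E = p + q - card I}"
  have fin: "finite R1" using sub I finite_subset by blast
  have pk: "p \<le> ?k" using card_mono[OF I sub] cR by simp
  have cD: "card (I - R1) = ?k - p" using card_Diff_subset[OF fin sub] cR by simp
  have "{R2. R1 \<union> R2 = I \<and> card R2 = q} = (\<lambda>E. (I - R1) \<union> E) ` ?E"
  proof (intro set_eqI iffI)
    fix R2 assume "R2 \<in> {R2. R1 \<union> R2 = I \<and> card R2 = q}"
    then have u: "R1 \<union> R2 = I" and c2: "card R2 = q" by auto
    have R2: "R2 = (I - R1) \<union> (R2 \<inter> R1)" using u by auto
    have "card R2 = card (I - R1) + card (R2 \<inter> R1)"
      by (subst R2, rule card_Un_disjoint) (use fin I in auto)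
    then have "card (R2 \<inter> R1) = p + q - ?k" using c2 cD le pk by simp
    then show "R2 \<in> (\<lambda>E. (I - R1) \<union> E) ` ?E" using R2 by blast
  next
    fix R2 assume "R2 \<in> (\<lambda>E. (I - R1) \<union> E) ` ?E"
    then obtain E where E: "E \<subseteq> R1" "card E = p + q - ?k" "R2 = (I - R1) \<union> E" by blast
    have "card R2 = card (I - R1) + card E"
      unfolding E(3) by (rule card_Un_disjoint) (use E(1) fin I finite_subset in auto)
    then show "R2 \<in> {R2. R1 \<union> R2 = I \<and> card R2 = q}" using cD E le pk sub by auto
  qed
  moreover have "inj_on (\<lambda>E. (I - R1) \<union> E) ?E"
    by (rule inj_onI) (use sub in blast)
  ultimately show ?thesis using n_subsets[OF fin] cR by (simp add: card_image)
qed

lemma card_covers: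
  assumes "k \<le> p + q"
  shows "card (covers p q k) = (k choose p) * (p choose (p+q-k))"
proof -
  let ?S = "{R1. R1 \<subseteq> {..<k} \<and> card R1 = p}"
  let ?B = "\<lambda>R1. {R2. R1 \<union> R2 = {..<k} \<and> card R2 = q}"
  have "covers p q k = Sigma ?S ?B" by (auto simp: covers_def)
  moreover have "finite ?S" "finite (?B R1)" for R1
    by (rule finite_subset[of _ "Pow {..<k}"]; auto)+
  ultimately have "card (covers p q k) = (\<Sum>R1\<in>?S. card (?B R1))" by simp
  also have "\<dots> = card ?S * (p choose (p+q-k))"
    using card_covering_sets[of "{..<k}" _ p q] assms by simp
  also have "card ?S = k choose p" using n_subsets[of "{..<k}" p] by simp
  finally show ?thesis .
qed

lemma hilb_product_covers: "(\<Sum>k\<le>p+q. hilb k X * of_nat (card (covers p q k))) = hilb p X * hilb q X"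
  using hilb_product_expansion[where p=p and q=q and X=X] by (simp add: card_covers)

section \<open>The coproduct of a single letter\<close>

definition enum_below :: "nat set \<Rightarrow> nat \<Rightarrow> nat list" where
  "enum_below R k = filter (\<lambda>i. i \<in> R) [0..<k]"

lemma enum_below:
  assumes "R \<subseteq> {..<k}"
  shows "set (enum_below R k) = R" "distinct (enum_below R k)" "length (enum_below R k) = card R"
proof -
  show s: "set (enum_below R k) = R" using assms by (auto simp: enum_below_def)
  show d: "distinct (enum_below R k)" by (simp add: enum_below_def)
  show "length (enum_below R k) = card R" using distinct_card[OF d] s by simp
qed

lemma packed_rows: "packed P \<Longrightarrow> r < nrows P \<Longrightarrow> \<exists>c<ncols P. P!r!c \<noteq> 0"
  unfolding packed_def nrows_def by (metis in_set_conv_nth nth_mem)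

lemma packed_cols: "packed P \<Longrightarrow> c < ncols P \<Longrightarrow> \<exists>r<nrows P. P!r!c \<noteq> 0"
  unfolding packed_def nrows_def by (metis in_set_conv_nth)

definition embed :: "mat \<Rightarrow> nat set \<Rightarrow> nat set \<Rightarrow> nat \<Rightarrow> nat \<Rightarrow> mat" where
  "embed P R C k l = mat_of k l (\<lambda>i j. if i \<in> R \<and> j \<in> C then
      P ! pos (enum_below R k) i ! pos (enum_below C l) j else 0)"

context
  fixes P :: mat and R C :: "nat set" and k l :: nat
  assumes P: "packed P" and R: "R \<subseteq> {..<k}" "card R = nrows P"
    and C: "C \<subseteq> {..<l}" "card C = ncols P" and kl: "k = 0 \<Longrightarrow> l = 0"
begin

private abbreviation "rs \<equiv> enum_below R k"
private abbreviation "cs \<equiv> enum_below C l"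
private abbreviation "E \<equiv> embed P R C k l"

private lemma rs: "set rs = R" "distinct rs" "length rs = nrows P"
  using enum_below[OF R(1)] R(2) by auto

private lemma cs: "set cs = C" "distinct cs" "length cs = ncols P"
  using enum_below[OF C(1)] C(2) by auto

private lemma E_nth: "i < k \<Longrightarrow> j < l \<Longrightarrow> E!i!j = (if i \<in> R \<and> j \<in> C then P!(pos rs i)!(pos cs j) else 0)"
  by (simp add: embed_def)

lemma shape_embed: "shape k l (embed P R C k l)"
  unfolding embed_def using kl by (rule shape_mat_of)

lemma nz_rows_embed: "nz_rows (embed P R C k l) = R"
proof (intro set_eqI iffI)
  fix i assume "i \<in> nz_rows E"
  then obtain j where "i < k" "j < l" "E!i!j \<noteq> 0" using shape_embed by (auto simp: nz_rows_def shape_def)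
  then show "i \<in> R" using E_nth by (auto split: if_splits)
next
  fix i assume i: "i \<in> R"
  then have ik: "i < k" using R by auto
  have r: "pos rs i < nrows P" "rs ! pos rs i = i" using nth_pos[OF rs(2), of i] i rs by auto
  obtain c where c: "c < ncols P" "P!(pos rs i)!c \<noteq> 0" using packed_rows[OF P r(1)] by blast
  have j: "cs!c \<in> C" "cs!c < l" "pos cs (cs!c) = c" using c(1) cs C(1) nth_mem pos_nth by auto
  have "E!i!(cs!c) \<noteq> 0" using E_nth[OF ik j(2)] i j c by simp
  then show "i \<in> nz_rows E" using ik j shape_embed by (auto simp: nz_rows_def shape_def)
qed

lemma nz_cols_embed: "nz_cols (embed P R C k l) = C"
proof (intro set_eqI iffI)
  fix j assume "j \<in> nz_cols E"
  then obtain i where "i < k" "j < l" "E!i!j \<noteq> 0" using shape_embed by (auto simp: nz_cols_def shape_def)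
  then show "j \<in> C" using E_nth by (auto split: if_splits)
next
  fix j assume j: "j \<in> C"
  then have jl: "j < l" using C by auto
  have c: "pos cs j < ncols P" "cs ! pos cs j = j" using nth_pos[OF cs(2), of j] j cs by auto
  obtain r where r: "r < nrows P" "P!r!(pos cs j) \<noteq> 0" using packed_cols[OF P c(1)] by blast
  have i: "rs!r \<in> R" "rs!r < k" "pos rs (rs!r) = r" using r(1) rs R(1) nth_mem pos_nth by auto
  have "E!(rs!r)!j \<noteq> 0" using E_nth[OF i(2) jl] i j r by simp
  then show "j \<in> nz_cols E" using jl i shape_embed by (auto simp: nz_cols_def shape_def)
qed

lemma pk_embed: "pk (embed P R C k l) = P"
proof -
  have len: "length E = k" "ncols E = l" using shape_embed by (auto simp: shape_def)
  have lists: "nz_row_list E = rs" "nz_col_list E = cs"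
    by (simp_all add: nz_row_list_def nz_col_list_def len nz_rows_embed nz_cols_embed enum_below_def)
  have rE: "rect E" using shape_embed shape_rect by blast
  show ?thesis
  proof (rule shape_eqI)
    show "shape (nrows P) (ncols P) (pk E)" "shape (nrows P) (ncols P) P"
      using shape_pk[OF rE] shape_packed[OF P] R(2) C(2) by (simp_all add: nz_rows_embed nz_cols_embed)
    fix r c assume r: "r < nrows P" and c: "c < ncols P"
    have in_RC: "rs!r \<in> R" "cs!c \<in> C" using r c rs cs nth_mem by auto
    then have "rs!r < k" "cs!c < l" using R(1) C(1) by auto
    then have "E ! (rs!r) ! (cs!c) = P ! r ! c"
      using E_nth in_RC r c rs cs by (simp add: pos_nth)
    then show "pk E ! r ! c = P ! r ! c"
      using r c rs cs pk_nth[OF rE] by (simp add: lists)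
  qed
qed

end

lemma eq_by_nz_pk:
  assumes s: "shape k l A" "shape k l A'"
    and e: "nz_rows A = nz_rows A'" "nz_cols A = nz_cols A'" "pk A = pk A'"
  shows "A = A'"
proof (rule shape_eqI[OF s])
  fix i j assume i: "i < k" and j: "j < l"
  have lA: "length A = k" "length A' = k" "ncols A = l" "ncols A' = l" using s by (auto simp: shape_def)
  have lists: "nz_row_list A = nz_row_list A'" "nz_col_list A = nz_col_list A'"
    by (simp_all add: nz_row_list_def nz_col_list_def lA e)
  have rA: "rect A" "rect A'" using s shape_rect by blast+
  show "A!i!j = A'!i!j"
  proof (cases "i \<in> nz_rows A \<and> j \<in> nz_cols A")
    case True
    define r where "r = pos (nz_row_list A) i"
    define c where "c = pos (nz_col_list A) j"
    have r: "r < length (nz_row_list A)" "nz_row_list A ! r = i"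
      using nth_pos[OF distinct_nz_row_list, of i A] True by (auto simp: r_def set_nz_row_list)
    have c: "c < length (nz_col_list A)" "nz_col_list A ! c = j"
      using nth_pos[OF distinct_nz_col_list, of j A] True by (auto simp: c_def set_nz_col_list)
    have "A!i!j = pk A ! r ! c" using pk_nth[OF rA(1) r(1) c(1)] r c by simp
    also have "\<dots> = pk A' ! r ! c" using e by simp
    also have "\<dots> = A'!i!j" using pk_nth[OF rA(2), of r c] r c lists by simp
    finally show ?thesis .
  next
    case False
    then have "A!i!j = 0" using i j lA by (auto simp: nz_rows_def nz_cols_def)
    moreover from False have "\<not> (i \<in> nz_rows A' \<and> j \<in> nz_cols A')" using e by simp
    then have "A'!i!j = 0" using i j lA by (auto simp: nz_rows_def nz_cols_def)
    ultimately show ?thesis by simp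
  qed
qed

lemma nz_decomp_union:
  assumes pM: "packed M" and d: "(A,B) \<in> decomp M"
  shows "nz_rows A \<union> nz_rows B = {..<nrows M}" "nz_cols A \<union> nz_cols B = {..<ncols M}"
proof -
  have s: "shape (nrows M) (ncols M) A" "shape (nrows M) (ncols M) B"
    and e: "\<forall>i<nrows M. \<forall>j<ncols M. A!i!j + B!i!j = M!i!j"
    using d decomp_iff by auto
  have l: "length A = nrows M" "length B = nrows M" "ncols A = ncols M" "ncols B = ncols M"
    using s by (auto simp: shape_def)
  show "nz_rows A \<union> nz_rows B = {..<nrows M}"
  proof (intro set_eqI iffI)
    fix i assume "i \<in> {..<nrows M}"
    then obtain c where "i < nrows M" "c < ncols M" "M!i!c \<noteq> 0" using packed_rows[OF pM] by blast
    moreover from this have "A!i!c \<noteq> 0 \<or> B!i!c \<noteq> 0" using e by (metis add_0)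
    ultimately show "i \<in> nz_rows A \<union> nz_rows B" by (auto simp: nz_rows_def l)
  qed (auto simp: nz_rows_def l)
  show "nz_cols A \<union> nz_cols B = {..<ncols M}"
  proof (intro set_eqI iffI)
    fix j assume "j \<in> {..<ncols M}"
    then obtain r where "j < ncols M" "r < nrows M" "M!r!j \<noteq> 0" using packed_cols[OF pM] by blast
    moreover from this have "A!r!j \<noteq> 0 \<or> B!r!j \<noteq> 0" using e by (metis add_0)
    ultimately show "j \<in> nz_cols A \<union> nz_cols B" by (auto simp: nz_cols_def l)
  qed (auto simp: nz_cols_def l)
qed

lemma packed_sum_nz_union:
  assumes s: "shape k l A" "shape k l B"
    and u: "nz_rows A \<union> nz_rows B = {..<k}" "nz_cols A \<union> nz_cols B = {..<l}"
  shows "packed (mat_of k l (\<lambda>i j. A!i!j + B!i!j))" (is "packed ?M")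
proof -
  have kl: "k = 0 \<Longrightarrow> l = 0" using s by (auto simp: shape_def)
  have sM: "shape k l ?M" using kl by (rule shape_mat_of)
  have l: "length A = k" "length B = k" "ncols A = l" "ncols B = l" using s by (auto simp: shape_def)
  have rows: "\<exists>a\<in>set r. a \<noteq> 0" if r: "r \<in> set ?M" for r
  proof -
    obtain i where "i < length ?M" "r = ?M!i" using r by (auto simp: in_set_conv_nth)
    then have i: "i < k" "r = ?M!i" using sM by (simp_all add: shape_def)
    then obtain j where "j < l" "A!i!j \<noteq> 0 \<or> B!i!j \<noteq> 0" using u(1) by (auto simp: nz_rows_def l)
    moreover have "?M!i!j \<in> set r" using i \<open>j < l\<close> shape_nth[OF sM i(1)] by (metis nth_mem)
    ultimately show ?thesis using i by (auto intro!: bexI[of _ "?M!i!j"])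
  qed
  have cols: "\<exists>r\<in>set ?M. r ! j \<noteq> 0" if j: "j < l" for j
  proof -
    obtain i where "i < k" "A!i!j \<noteq> 0 \<or> B!i!j \<noteq> 0" using u(2) j by (auto simp: nz_cols_def l)
    then show ?thesis using j sM by (auto simp: shape_def intro!: bexI[of _ "?M!i"])
  qed
  show ?thesis using sM rows cols by (auto simp: packed_def shape_def)
qed

lemma decomp_pk_weight:
  assumes "M \<in> packed_wt a" "(A,B) \<in> decomp M"
  shows "packed (pk A) \<and> packed (pk B) \<and> weight (pk A) + weight (pk B) = a"
proof -
  have "rect A" "rect B" using assms(2) decomp_iff shape_rect by blast+
  then show ?thesis using packed_pk weight_pk weight_decomp assms by (auto simp: packed_wt_def)
qed

definition pk_decomps :: "nat \<Rightarrow> mat \<Rightarrow> mat \<Rightarrow> (mat \<times> mat \<times> mat) set" where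
  "pk_decomps a P Q = Sigma (packed_wt a) (\<lambda>M. {z\<in>decomp M. pk (fst z) = P \<and> pk (snd z) = Q})"

definition support_data :: "mat \<times> mat \<times> mat \<Rightarrow> (nat \<times> nat) \<times> (nat set \<times> nat set) \<times> (nat set \<times> nat set)" where
  "support_data t = ((nrows (fst t), ncols (fst t)),
     (nz_rows (fst (snd t)), nz_rows (snd (snd t))), (nz_cols (fst (snd t)), nz_cols (snd (snd t))))"

definition cover_data :: "mat \<Rightarrow> mat \<Rightarrow> ((nat \<times> nat) \<times> (nat set \<times> nat set) \<times> (nat set \<times> nat set)) set" where
  "cover_data P Q = Sigma ({..nrows P + nrows Q} \<times> {..ncols P + ncols Q})
     (\<lambda>kl. covers (nrows P) (nrows Q) (fst kl) \<times> covers (ncols P) (ncols Q) (snd kl))"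

lemma sum_hilb_mat_cop_basis:
  "(\<Sum>M\<in>packed_wt a. hilb_mat x y M * cop_basis M (P,Q)) = (\<Sum>t\<in>pk_decomps a P Q. hilb_mat x y (fst t))"
proof -
  have "hilb_mat x y M * cop_basis M (P,Q) =
      (\<Sum>z\<in>{z\<in>decomp M. pk (fst z) = P \<and> pk (snd z) = Q}. hilb_mat x y M)" for M
    unfolding cop_basis_eq_sum sum_distrib_left sum.inter_filter[OF finite_decomp]
    by (intro sum.cong refl) (auto simp: prod_eq_iff)
  then have "(\<Sum>M\<in>packed_wt a. hilb_mat x y M * cop_basis M (P,Q)) =
      (\<Sum>M\<in>packed_wt a. \<Sum>z\<in>{z\<in>decomp M. pk (fst z) = P \<and> pk (snd z) = Q}. hilb_mat x y M)"
    by (intro sum.cong) auto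
  also have "\<dots> = (\<Sum>t\<in>pk_decomps a P Q. hilb_mat x y (fst t))"
    unfolding pk_decomps_def by (subst sum.Sigma) (auto simp: finite_packed_wt finite_decomp split_def)
  finally show ?thesis .
qed

lemma inj_on_support_data: "inj_on support_data (pk_decomps a P Q)"
proof (rule inj_onI)
  fix t t' assume t: "t \<in> pk_decomps a P Q" and t': "t' \<in> pk_decomps a P Q"
    and e: "support_data t = support_data t'"
  obtain M A B M' A' B' where tt: "t = (M,(A,B))" "t' = (M',(A',B'))" by (metis prod.collapse)
  have h: "packed M" "(A,B) \<in> decomp M" "pk A = P" "pk B = Q"
    and h': "packed M'" "(A',B') \<in> decomp M'" "pk A' = P" "pk B' = Q"
    using t t' by (auto simp: pk_decomps_def packed_wt_def tt)
  have k: "nrows M' = nrows M" "ncols M' = ncols M"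
    and z: "nz_rows A = nz_rows A'" "nz_rows B = nz_rows B'" "nz_cols A = nz_cols A'" "nz_cols B = nz_cols B'"
    using e by (auto simp: support_data_def tt)
  have s: "shape (nrows M) (ncols M) A" "shape (nrows M) (ncols M) B"
    and eM: "\<forall>i<nrows M. \<forall>j<ncols M. A!i!j + B!i!j = M!i!j"
    using h(2) decomp_iff by auto
  have s': "shape (nrows M) (ncols M) A'" "shape (nrows M) (ncols M) B'"
    and eM': "\<forall>i<nrows M. \<forall>j<ncols M. A'!i!j + B'!i!j = M'!i!j"
    using h'(2) decomp_iff k by auto
  have A: "A = A'" by (rule eq_by_nz_pk[OF s(1) s'(1) z(1) z(3)]) (simp add: h h')
  have B: "B = B'" by (rule eq_by_nz_pk[OF s(2) s'(2) z(2) z(4)]) (simp add: h h')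
  have "M = M'"
    by (rule shape_eqI[OF shape_packed[OF h(1)]]) (use shape_packed[OF h'(1)] k eM eM' A B in auto)
  then show "t = t'" using A B by (simp add: tt)
qed

lemma support_data_in_cover_data:
  assumes "t \<in> pk_decomps a P Q"
  shows "support_data t \<in> cover_data P Q"
proof -
  obtain M A B where tt: "t = (M,(A,B))" by (metis prod.collapse)
  have pM: "packed M" and d: "(A,B) \<in> decomp M" and pk: "pk A = P" "pk B = Q"
    using assms by (auto simp: pk_decomps_def packed_wt_def tt)
  have "rect A" "rect B" using d decomp_iff shape_rect by blast+
  then have c: "card (nz_rows A) = nrows P" "card (nz_rows B) = nrows Q"
    "card (nz_cols A) = ncols P" "card (nz_cols B) = ncols Q"
    using nrows_pk ncols_pk pk by auto
  note u = nz_decomp_union[OF pM d]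
  have "nrows M \<le> nrows P + nrows Q" "ncols M \<le> ncols P + ncols Q"
    using card_Un_le[of "nz_rows A" "nz_rows B"] card_Un_le[of "nz_cols A" "nz_cols B"] u c by simp_all
  then show ?thesis using u c by (simp add: cover_data_def support_data_def tt covers_def)
qed

text \<open>Conversely every covering arises: embed P and Q along the given rows and columns and
  add them up.\<close>
lemma cover_data_support_data:
  assumes pP: "packed P" and pQ: "packed Q" and w: "weight P + weight Q = a"
    and u: "u \<in> cover_data P Q"
  shows "\<exists>t\<in>pk_decomps a P Q. u = support_data t"
proof -
  obtain k l R1 R2 C1 C2 where uu: "u = ((k,l),((R1,R2),(C1,C2)))" by (metis prod.collapse)
  have RU: "R1 \<union> R2 = {..<k}" "card R1 = nrows P" "card R2 = nrows Q"
    and CU: "C1 \<union> C2 = {..<l}" "card C1 = ncols P" "card C2 = ncols Q"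
    using u by (auto simp: cover_data_def uu covers_def)
  have kl: "l = 0" if "k = 0"
  proof -
    have "nrows P = 0" "nrows Q = 0" using RU that by auto
    then have "ncols P = 0" "ncols Q = 0" by (auto simp: nrows_def ncols_def)
    moreover have "finite C1" "finite C2" using CU by (metis finite_Un finite_lessThan)+
    ultimately show ?thesis using CU by auto
  qed
  have emb: "R1 \<subseteq> {..<k}" "R2 \<subseteq> {..<k}" "C1 \<subseteq> {..<l}" "C2 \<subseteq> {..<l}" using RU CU by auto
  define A where "A = embed P R1 C1 k l"
  define B where "B = embed Q R2 C2 k l"
  define M where "M = mat_of k l (\<lambda>i j. A!i!j + B!i!j)"
  have sA: "shape k l A" and sB: "shape k l B" unfolding A_def B_def
    by (rule shape_embed; use pP pQ emb RU CU kl in auto)+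
  have nzA: "nz_rows A = R1" "nz_cols A = C1" "pk A = P" unfolding A_def
    by (rule nz_rows_embed nz_cols_embed pk_embed; use pP emb RU CU kl in auto)+
  have nzB: "nz_rows B = R2" "nz_cols B = C2" "pk B = Q" unfolding B_def
    by (rule nz_rows_embed nz_cols_embed pk_embed; use pQ emb RU CU kl in auto)+
  have sM: "shape k l M" unfolding M_def using kl by (rule shape_mat_of)
  then have nM: "nrows M = k" "ncols M = l" by (auto simp: shape_def nrows_def)
  have dec: "(A,B) \<in> decomp M" unfolding decomp_iff nM using sA sB by (simp add: M_def)
  have pM: "packed M" unfolding M_def using sA sB RU CU nzA nzB by (intro packed_sum_nz_union) auto
  have "weight M = a"
    using weight_decomp[OF pM dec] weight_pk sA sB shape_rect nzA nzB w by metis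
  then have "(M,(A,B)) \<in> pk_decomps a P Q" using pM dec nzA nzB by (simp add: pk_decomps_def packed_wt_def)
  moreover have "u = support_data (M,(A,B))" using nzA nzB nM by (simp add: uu support_data_def)
  ultimately show ?thesis by blast
qed

lemma bij_betw_support_data:
  "packed P \<Longrightarrow> packed Q \<Longrightarrow> weight P + weight Q = a \<Longrightarrow>
    bij_betw support_data (pk_decomps a P Q) (cover_data P Q)"
  unfolding bij_betw_def using inj_on_support_data support_data_in_cover_data
    cover_data_support_data[of P Q a] by blast

lemma hilb_mat_cop_sum:
  "(\<Sum>M\<in>packed_wt a. hilb_mat x y M * cop_basis M (P,Q)) =
     (if packed P \<and> packed Q \<and> weight P + weight Q = a then hilb_mat x y P * hilb_mat x y Q else 0)"
proof (cases "packed P \<and> packed Q \<and> weight P + weight Q = a")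
  case False
  then have "pk_decomps a P Q = {}" using decomp_pk_weight by (fastforce simp: pk_decomps_def)
  then show ?thesis using False by (auto simp: sum_hilb_mat_cop_basis)
next
  case True
  let ?h = "\<lambda>u :: (nat \<times> nat) \<times> (nat set \<times> nat set) \<times> (nat set \<times> nat set).
    hilb (fst (fst u)) x * hilb (snd (fst u)) y"
  let ?rp = "nrows P" and ?rq = "nrows Q" and ?cp = "ncols P" and ?cq = "ncols Q"
  have bij: "bij_betw support_data (pk_decomps a P Q) (cover_data P Q)"
    using True by (intro bij_betw_support_data) auto
  have "(\<Sum>t\<in>pk_decomps a P Q. hilb_mat x y (fst t)) = (\<Sum>t\<in>pk_decomps a P Q. ?h (support_data t))"
    by (simp add: support_data_def hilb_mat_def)
  also have "\<dots> = (\<Sum>u\<in>cover_data P Q. ?h u)" by (rule sum.reindex_bij_betw[OF bij])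
  also have "\<dots> = (\<Sum>kl\<in>{..?rp+?rq} \<times> {..?cp+?cq}.
      \<Sum>w\<in>covers ?rp ?rq (fst kl) \<times> covers ?cp ?cq (snd kl). ?h (kl, w))"
    unfolding cover_data_def by (subst sum.Sigma) (auto simp: finite_covers split_def)
  also have "\<dots> = (\<Sum>kl\<in>{..?rp+?rq} \<times> {..?cp+?cq}.
      (hilb (fst kl) x * of_nat (card (covers ?rp ?rq (fst kl)))) *
      (hilb (snd kl) y * of_nat (card (covers ?cp ?cq (snd kl)))))"
    by (intro sum.cong refl) (simp add: card_cartesian_product)
  also have "\<dots> = (\<Sum>k\<le>?rp+?rq. hilb k x * of_nat (card (covers ?rp ?rq k))) *
      (\<Sum>l\<le>?cp+?cq. hilb l y * of_nat (card (covers ?cp ?cq l)))"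
    by (simp add: sum_product sum.cartesian_product split_def)
  also have "\<dots> = hilb_mat x y P * hilb_mat x y Q"
    by (simp add: hilb_product_covers hilb_mat_def)
  finally show ?thesis using True by (simp add: sum_hilb_mat_cop_basis)
qed

definition splits :: "nat list \<Rightarrow> (nat list \<times> nat list) set" where
  "splits as = {(bs,cs). length bs = length as \<and> length cs = length as \<and> (\<forall>i<length as. bs!i + cs!i = as!i)}"

definition nat_splits :: "nat \<Rightarrow> (nat \<times> nat) set" where
  "nat_splits a = {(b,c). b + c = a}"

definition cons_split :: "(nat \<times> nat) \<times> (nat list \<times> nat list) \<Rightarrow> nat list \<times> nat list" where
  "cons_split w = (fst (fst w) # fst (snd w), snd (fst w) # snd (snd w))"

lemma finite_nat_splits: "finite (nat_splits a)"
  by (rule finite_subset[of _ "{..a} \<times> {..a}"]) (auto simp: nat_splits_def)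

lemma splits_Nil: "splits [] = {([],[])}"
  by (auto simp: splits_def)

lemma splits_Cons: "splits (a#as) = cons_split ` (nat_splits a \<times> splits as)"
proof (intro set_eqI iffI)
  fix z assume "z \<in> splits (a#as)"
  then obtain b bs c cs where z: "z = (b#bs, c#cs)" and "(b,c) \<in> nat_splits a" "(bs,cs) \<in> splits as"
    by (auto simp: splits_def nat_splits_def length_Suc_conv) (metis Suc_less_eq nth_Cons_0 nth_Cons_Suc zero_less_Suc)
  then show "z \<in> cons_split ` (nat_splits a \<times> splits as)"
    by (intro image_eqI[of _ _ "((b,c),(bs,cs))"]) (auto simp: cons_split_def)
next
  fix z assume "z \<in> cons_split ` (nat_splits a \<times> splits as)"
  then show "z \<in> splits (a#as)"
    by (auto simp: cons_split_def nat_splits_def splits_def nth_Cons split: nat.splits)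
qed

lemma inj_cons_split: "inj_on cons_split X"
  by (auto simp: inj_on_def cons_split_def)

lemma sum_list_splits: "z \<in> splits as \<Longrightarrow> sum_list (fst z) + sum_list (snd z) = sum_list as"
proof (induction as arbitrary: z)
  case (Cons a as)
  then obtain u v where "z = cons_split (u,v)" "u \<in> nat_splits a" "v \<in> splits as" by (auto simp: splits_Cons)
  then show ?case using Cons.IH[of v] by (auto simp: cons_split_def nat_splits_def)
qed (simp add: splits_Nil)

lemma hilb_mat_cop_sum_splits: "(\<Sum>M\<in>packed_wt a. hilb_mat x y M * cop_basis M (P,Q))
   = (\<Sum>z\<in>nat_splits a. K_row x y [fst z] P * K_row x y [snd z] Q)"
proof -
  have "(\<Sum>z\<in>nat_splits a. K_row x y [fst z] P * K_row x y [snd z] Q)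
      = (\<Sum>z\<in>nat_splits a. if z = (weight P, weight Q) then
           (if packed P \<and> packed Q then hilb_mat x y P * hilb_mat x y Q else 0) else 0)"
    by (intro sum.cong refl) (auto simp: K_row_single packed_wt_def)
  also have "\<dots> = (if packed P \<and> packed Q \<and> weight P + weight Q = a then hilb_mat x y P * hilb_mat x y Q else 0)"
    unfolding sum.delta[OF finite_nat_splits] by (auto simp: nat_splits_def)
  finally show ?thesis by (simp add: hilb_mat_cop_sum)
qed

definition swap_middle :: "('a \<times> 'b) \<times> ('c \<times> 'd) \<Rightarrow> ('a \<times> 'c) \<times> ('b \<times> 'd)" where
  "swap_middle q = ((fst (fst q), fst (snd q)), (snd (fst q), snd (snd q)))"

lemma sum_swap_middle: "(\<Sum>q\<in>(V \<times> V) \<times> (V \<times> V). g (swap_middle q)) = (\<Sum>q\<in>(V \<times> V) \<times> (V \<times> V). g q)"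
  by (rule sum.reindex_bij_betw, rule bij_betwI[where g = swap_middle]) (auto simp: swap_middle_def)

lemma K_row_Cons_mult:
  assumes "b \<le> W" "sum_list bs \<le> W" "c \<le> W" "sum_list cs \<le> W"
  shows "K_row x y (b#bs) P * K_row x y (c#cs) Q = (\<Sum>q\<in>packed_quads W.
     diag_indicator P Q q * ((K_row x y [b] (fst (fst q)) * K_row x y [c] (snd (fst q))) *
                 (K_row x y bs (fst (snd q)) * K_row x y cs (snd (snd q)))))"
proof -
  let ?V = "packed_upto W"
  have split: "K_row x y (d#ds) N = (\<Sum>p\<in>?V \<times> ?V.
     if diag (fst p) (snd p) = N then K_row x y [d] (fst p) * K_row x y ds (snd p) else 0)"
    if "d \<le> W" "sum_list ds \<le> W" for d ds N
  proof -
    have "packed_wt (sum_list [d]) \<subseteq> ?V" "packed_wt (sum_list ds) \<subseteq> ?V"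
      using that by (auto simp: packed_upto_def packed_wt_def)
    from K_row_append[OF finite_packed_upto finite_packed_upto this] show ?thesis
      by (simp add: sum.cartesian_product split_def)
  qed
  let ?G = "\<lambda>r::(mat\<times>mat)\<times>(mat\<times>mat).
    (if diag (fst (fst r)) (snd (fst r)) = P then K_row x y [b] (fst (fst r)) * K_row x y bs (snd (fst r)) else 0) *
    (if diag (fst (snd r)) (snd (snd r)) = Q then K_row x y [c] (fst (snd r)) * K_row x y cs (snd (snd r)) else 0)"
  have "K_row x y (b#bs) P * K_row x y (c#cs) Q = (\<Sum>r\<in>(?V \<times> ?V) \<times> (?V \<times> ?V). ?G r)"
    unfolding split[OF assms(1,2)] split[OF assms(3,4)] sum_product sum.cartesian_product
    by (simp add: split_def)
  also have "\<dots> = (\<Sum>q\<in>(?V \<times> ?V) \<times> (?V \<times> ?V). ?G (swap_middle q))"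
    by (rule sum_swap_middle[symmetric])
  also have "\<dots> = (\<Sum>q\<in>packed_quads W.
     diag_indicator P Q q * ((K_row x y [b] (fst (fst q)) * K_row x y [c] (snd (fst q))) *
                 (K_row x y bs (fst (snd q)) * K_row x y cs (snd (snd q)))))"
    unfolding packed_quads_def by (intro sum.cong refl) (simp add: swap_middle_def diag_indicator_def)
  finally show ?thesis .
qed

lemma K_row_Cons_cop:
  "(\<Sum>N\<in>packed_wt (sum_list (a#as)). K_row x y (a#as) N * cop_basis N (P,Q)) =
    (\<Sum>q\<in>packed_quads (a + sum_list as). diag_indicator P Q q *
      ((\<Sum>M\<in>packed_wt a. hilb_mat x y M * cop_basis M (fst q)) *
       (\<Sum>N\<in>packed_wt (sum_list as). K_row x y as N * cop_basis N (snd q))))"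
proof -
  define W where "W = a + sum_list as"
  let ?Z = "packed_wt a \<times> packed_wt (sum_list as)"
  let ?K = "K_row x y"
  have zw: "packed (fst z)" "packed (snd z)" "weight (fst z) \<le> W" "weight (snd z) \<le> W" if "z \<in> ?Z" for z
    using that by (auto simp: W_def packed_wt_def)
  have "(\<Sum>N\<in>packed_wt (sum_list (a#as)). ?K (a#as) N * cop_basis N (P,Q))
     = (\<Sum>N\<in>packed_wt (sum_list (a#as)). cop_basis N (P,Q) *
          (\<Sum>z\<in>?Z. if diag (fst z) (snd z) = N then hilb_mat x y (fst z) * ?K as (snd z) else 0))"
    by (intro sum.cong refl) (simp add: K_row_Cons sum.cartesian_product mult.commute split_def cong: if_cong)
  also have "\<dots> = (\<Sum>z\<in>?Z. cop_basis (diag (fst z) (snd z)) (P,Q) * (hilb_mat x y (fst z) * ?K as (snd z)))"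
    by (rule sum_fibres[OF finite_packed_wt]) (auto simp: diag_in_packed_wt)
  also have "\<dots> = (\<Sum>z\<in>?Z. \<Sum>q\<in>packed_quads W. diag_indicator P Q q *
      ((hilb_mat x y (fst z) * cop_basis (fst z) (fst q)) * (?K as (snd z) * cop_basis (snd z) (snd q))))"
    by (intro sum.cong refl)
      (subst cop_basis_diag_indicator[OF zw], simp_all add: sum_distrib_left sum_distrib_right mult_ac)
  also have "\<dots> = (\<Sum>q\<in>packed_quads W. diag_indicator P Q q *
      ((\<Sum>M\<in>packed_wt a. hilb_mat x y M * cop_basis M (fst q)) *
       (\<Sum>N\<in>packed_wt (sum_list as). ?K as N * cop_basis N (snd q))))"
    by (subst sum.swap, intro sum.cong refl) (subst sum_product_Times, subst sum_distrib_left, rule refl)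
  finally show ?thesis unfolding W_def .
qed

lemma K_row_cop: "(\<Sum>N\<in>packed_wt (sum_list as). K_row x y as N * cop_basis N (P,Q))
   = (\<Sum>z\<in>splits as. K_row x y (fst z) P * K_row x y (snd z) Q)"
proof (induction as arbitrary: P Q)
  case Nil
  have "cop_basis [] (P,Q) = (if ([],[]) = (P,Q) then 1 else 0)"
    by (simp add: cop_basis_eq_sum decomp_Nil pk_def)
  then show ?case by (simp add: packed_wt_0 K_row_Nil unit_el_def splits_Nil)
next
  case (Cons a as)
  define W where "W = a + sum_list as"
  let ?K = "K_row x y"
  let ?F = "\<lambda>w q. (?K [fst (fst w)] (fst (fst q)) * ?K [snd (fst w)] (snd (fst q))) *
      (?K (fst (snd w)) (fst (snd q)) * ?K (snd (snd w)) (snd (snd q)))"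
  have "(\<Sum>N\<in>packed_wt (sum_list (a#as)). ?K (a#as) N * cop_basis N (P,Q))
      = (\<Sum>q\<in>packed_quads W. \<Sum>w\<in>nat_splits a \<times> splits as. diag_indicator P Q q * ?F w q)"
  proof -
    have IH: "(\<Sum>N\<in>packed_wt (sum_list as). ?K as N * cop_basis N w) =
        (\<Sum>z\<in>splits as. ?K (fst z) (fst w) * ?K (snd z) (snd w))" for w
      using Cons.IH[of "fst w" "snd w"] by simp
    have single: "(\<Sum>M\<in>packed_wt a. hilb_mat x y M * cop_basis M w) =
        (\<Sum>u\<in>nat_splits a. ?K [fst u] (fst w) * ?K [snd u] (snd w))" for w
      using hilb_mat_cop_sum_splits[where a = a and P = "fst w" and Q = "snd w"] by simp
    show ?thesis unfolding K_row_Cons_cop W_def single IH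
      by (intro sum.cong refl) (subst sum_product_Times, subst sum_distrib_left, rule refl)
  qed
  also have "\<dots> = (\<Sum>w\<in>nat_splits a \<times> splits as. ?K (fst (cons_split w)) P * ?K (snd (cons_split w)) Q)"
  proof (subst sum.swap, intro sum.cong refl)
    fix w assume w: "w \<in> nat_splits a \<times> splits as"
    then have b: "fst (fst w) \<le> W" "snd (fst w) \<le> W" by (auto simp: nat_splits_def W_def)
    have "sum_list (fst (snd w)) + sum_list (snd (snd w)) = sum_list as" using w sum_list_splits by auto
    then have c: "sum_list (fst (snd w)) \<le> W" "sum_list (snd (snd w)) \<le> W" by (auto simp: W_def)
    show "(\<Sum>q\<in>packed_quads W. diag_indicator P Q q * ?F w q) = ?K (fst (cons_split w)) P * ?K (snd (cons_split w)) Q"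
      unfolding cons_split_def fst_conv snd_conv by (rule K_row_Cons_mult[OF b(1) c(1) b(2) c(2), symmetric])
  qed
  also have "\<dots> = (\<Sum>z\<in>splits (a#as). ?K (fst z) P * ?K (snd z) Q)"
    unfolding splits_Cons by (rule sum.reindex[OF inj_cons_split, symmetric, unfolded comp_def])
  finally show ?case .
qed

section \<open>Linear extensions\<close>

lemma lin_sum: "finite S \<Longrightarrow> supp f \<subseteq> S \<Longrightarrow> lin g f N = (\<Sum>M\<in>S. f M * g M N)"
  unfolding lin_def by (rule sum.mono_neutral_left) (auto simp: supp_def)

lemma bilin_sum: "finite S1 \<Longrightarrow> finite S2 \<Longrightarrow> supp f \<subseteq> S1 \<Longrightarrow> supp g \<subseteq> S2 \<Longrightarrow>
   bilin m f g N = (\<Sum>M1\<in>S1. \<Sum>M2\<in>S2. if m M1 M2 = N then f M1 * g M2 else 0)"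
proof -
  assume a: "finite S1" "finite S2" "supp f \<subseteq> S1" "supp g \<subseteq> S2"
  have i: "(\<Sum>M2\<in>supp g. if m M1 M2 = N then f M1 * g M2 else 0)
     = (\<Sum>M2\<in>S2. if m M1 M2 = N then f M1 * g M2 else 0)" for M1
    by (rule sum.mono_neutral_left[OF a(2,4)]) (auto simp: supp_def)
  show ?thesis unfolding bilin_def i
    by (rule sum.mono_neutral_left[OF a(1,3)]) (simp add: supp_def cong: if_cong)
qed

lemma supp_lin: "supp (lin g f) \<subseteq> (\<Union>M\<in>supp f. supp (g M))"
proof
  fix N assume "N \<in> supp (lin g f)"
  then obtain M where "M \<in> supp f" "f M * g M N \<noteq> 0"
    by (auto simp: supp_def lin_def elim: sum.not_neutral_contains_not_neutral)
  then show "N \<in> (\<Union>M\<in>supp f. supp (g M))" by (auto simp: supp_def)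
qed

lemma lin_cong: "(\<And>M. M \<in> supp f \<Longrightarrow> g M = g' M) \<Longrightarrow> lin g f = lin g' f"
  by (simp add: lin_def)

lemma lin_lin:
  assumes "finite (supp f)" "\<And>M. M \<in> supp f \<Longrightarrow> finite (supp (G M))"
  shows "lin h (lin G f) = lin (\<lambda>M. lin h (G M)) f"
proof
  fix v
  define S where "S = (\<Union>M\<in>supp f. supp (G M))"
  have S: "finite S" "\<And>M. M \<in> supp f \<Longrightarrow> supp (G M) \<subseteq> S" using assms by (auto simp: S_def)
  have "lin h (lin G f) v = (\<Sum>N\<in>S. (\<Sum>M\<in>supp f. f M * G M N) * h N v)"
    by (subst lin_sum[OF S(1)]) (use supp_lin[of G f] in \<open>auto simp: S_def lin_def mult.commute\<close>)
  also have "\<dots> = (\<Sum>M\<in>supp f. f M * (\<Sum>N\<in>S. G M N * h N v))"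
    by (simp add: sum_distrib_left sum_distrib_right sum.swap[of _ S] mult.assoc)
  also have "\<dots> = lin (\<lambda>M. lin h (G M)) f v"
    unfolding lin_def[of "\<lambda>M. lin h (G M)"] by (intro sum.cong refl) (simp add: lin_sum[OF S(1) S(2)])
  finally show "lin h (lin G f) v = lin (\<lambda>M. lin h (G M)) f v" .
qed

lemma supp_bilin: "supp (bilin m f g) \<subseteq> (\<lambda>z. m (fst z) (snd z)) ` (supp f \<times> supp g)"
proof
  fix M assume "M \<in> supp (bilin m f g)"
  then obtain z where "z \<in> supp f \<times> supp g" "(if m (fst z) (snd z) = M then f (fst z) * g (snd z) else 0) \<noteq> 0"
    by (auto simp: supp_def bilin_def sum.cartesian_product split_def elim: sum.not_neutral_contains_not_neutral)
  then show "M \<in> (\<lambda>z. m (fst z) (snd z)) ` (supp f \<times> supp g)" by (auto split: if_splits)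
qed

lemma lin_bilin:
  assumes fin: "finite (supp f)" "finite (supp g)" "\<And>M. M \<in> supp f \<union> supp g \<Longrightarrow> finite (supp (G M))"
    and mult: "\<And>M1 M2. M1 \<in> supp f \<Longrightarrow> M2 \<in> supp g \<Longrightarrow> G (m1 M1 M2) = bilin m2 (G M1) (G M2)"
  shows "lin G (bilin m1 f g) = bilin m2 (lin G f) (lin G g)"
proof
  fix N
  let ?Z = "supp f \<times> supp g" and ?t = "\<lambda>z. m1 (fst z) (snd z)"
  define T where "T = (\<Union>M\<in>supp f \<union> supp g. supp (G M))"
  have T: "finite T" "\<And>M. M \<in> supp f \<union> supp g \<Longrightarrow> supp (G M) \<subseteq> T" using fin by (auto simp: T_def)
  have hsum: "bilin m1 f g M = (\<Sum>z\<in>?Z. if ?t z = M then f (fst z) * g (snd z) else 0)" for M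
    by (simp add: bilin_def sum.cartesian_product split_def)
  have "supp (bilin m1 f g) \<subseteq> ?t ` ?Z" by (rule supp_bilin)
  then have "lin G (bilin m1 f g) N = (\<Sum>M\<in>?t ` ?Z. G M N * (\<Sum>z\<in>?Z. if ?t z = M then f (fst z) * g (snd z) else 0))"
    using fin by (subst lin_sum) (auto simp: hsum mult.commute)
  also have "\<dots> = (\<Sum>z\<in>?Z. G (?t z) N * (f (fst z) * g (snd z)))"
    using fin by (intro sum_fibres) auto
  also have "\<dots> = (\<Sum>z\<in>?Z. \<Sum>N1\<in>T. \<Sum>N2\<in>T. (if m2 N1 N2 = N then 1 else 0) *
      ((f (fst z) * G (fst z) N1) * (g (snd z) * G (snd z) N2)))"
  proof (intro sum.cong refl)
    fix z assume z: "z \<in> ?Z"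
    then have "G (?t z) N = (\<Sum>N1\<in>T. \<Sum>N2\<in>T. if m2 N1 N2 = N then G (fst z) N1 * G (snd z) N2 else 0)"
      using mult[of "fst z" "snd z"] bilin_sum[OF T(1) T(1) T(2) T(2)] by (simp add: mem_Times_iff)
    then show "G (?t z) N * (f (fst z) * g (snd z)) = (\<Sum>N1\<in>T. \<Sum>N2\<in>T. (if m2 N1 N2 = N then 1 else 0) *
      ((f (fst z) * G (fst z) N1) * (g (snd z) * G (snd z) N2)))"
      by (simp only: sum_distrib_right) (intro sum.cong refl, simp)
  qed
  also have "\<dots> = (\<Sum>N1\<in>T. \<Sum>N2\<in>T. (if m2 N1 N2 = N then 1 else 0) * (lin G f N1 * lin G g N2))"
  proof -
    have prod: "lin G f N1 * lin G g N2 =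
        (\<Sum>z\<in>?Z. (f (fst z) * G (fst z) N1) * (g (snd z) * G (snd z) N2))" for N1 N2
      unfolding lin_def by (rule sum_product_Times)
    show ?thesis unfolding prod sum_distrib_left by (subst sum.swap, intro sum.cong refl, rule sum.swap)
  qed
  also have "\<dots> = (\<Sum>N1\<in>T. \<Sum>N2\<in>T. if m2 N1 N2 = N then lin G f N1 * lin G g N2 else 0)"
    by (intro sum.cong refl) simp
  also have "\<dots> = bilin m2 (lin G f) (lin G g) N"
    using T supp_lin[of G f] supp_lin[of G g] by (intro bilin_sum[symmetric]) (auto simp: T_def)
  finally show "lin G (bilin m1 f g) N = bilin m2 (lin G f) (lin G g) N" .
qed

section \<open>K is a bialgebra morphism\<close>

definition row_of :: "mat \<Rightarrow> nat list" where
  "row_of M = (if M = [] then [] else hd M)"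

lemma K_basis_row_of: "K_basis x y M = K_row x y (row_of M)"
  by (simp add: K_basis_def row_of_def K_row_Nil)

lemma supp_K_basis: "supp (K_basis x y M) \<subseteq> packed_wt (sum_list (row_of M))"
  unfolding K_basis_row_of supp_def using K_row_support by blast

lemma finite_supp_K_basis: "finite (supp (K_basis x y M))"
  by (rule finite_subset[OF supp_K_basis finite_packed_wt])

lemma supp_cop_basis: "supp (cop_basis M) \<subseteq> (\<lambda>z. (pk (fst z), pk (snd z))) ` decomp M"
proof
  fix v assume "v \<in> supp (cop_basis M)"
  then obtain z where "z \<in> decomp M" "(if (pk (fst z), pk (snd z)) = v then 1 else 0) \<noteq> (0::rat)"
    unfolding supp_def cop_basis_eq_sum mem_Collect_eq by (rule sum.not_neutral_contains_not_neutral)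
  then show "v \<in> (\<lambda>z. (pk (fst z), pk (snd z))) ` decomp M" by (auto split: if_splits)
qed

lemma finite_supp_cop_basis: "finite (supp (cop_basis M))"
  by (rule finite_subset[OF supp_cop_basis]) (simp add: finite_decomp)

lemma K_in_H_Pack:
  assumes "f \<in> H_Pack1" shows "K x y f \<in> H_Pack"
proof -
  have sub: "supp (K x y f) \<subseteq> (\<Union>M\<in>supp f. packed_wt (sum_list (row_of M)))"
    using supp_lin[of "K_basis x y" f] supp_K_basis[of x y] unfolding K_def by blast
  moreover have "finite (\<Union>M\<in>supp f. packed_wt (sum_list (row_of M)))"
    using assms by (simp add: H_Pack1_def finite_packed_wt)
  ultimately show ?thesis unfolding H_Pack_def by (auto simp: packed_wt_def intro: finite_subset)
qed

lemma K_unit: "K x y unit_el = unit_el"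
proof -
  have "supp unit_el = {[]}" by (auto simp: supp_def unit_el_def)
  then show ?thesis by (simp add: K_def lin_def K_basis_def unit_el_def fun_eq_iff)
qed

lemma K_counit:
  assumes "f \<in> H_Pack1" shows "counit (K x y f) = counit f"
proof -
  have "f M * K_basis x y M [] = (if M = [] then f M else 0)" if M: "M \<in> supp f" for M
  proof (cases "M = []")
    case False
    then obtain r where r: "M = [r]" "r \<noteq> []" "\<forall>a\<in>set r. 1 \<le> a"
      using assms M by (auto simp: H_Pack1_def packed_row_def)
    have "1 \<le> hd r" "hd r \<le> sum_list r"
      using r hd_in_set[OF r(2)] member_le_sum_list[OF hd_in_set[OF r(2)]] by auto
    then have "weight [] \<noteq> sum_list (row_of M)" by (simp add: row_of_def r(1) del: sum_list_eq_0_iff)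
    then have "[] \<notin> packed_wt (sum_list (row_of M))" unfolding packed_wt_def by blast
    then show ?thesis using supp_K_basis[of x y M] False by (auto simp: supp_def)
  qed (simp add: K_basis_def unit_el_def)
  then have "counit (K x y f) = (\<Sum>M\<in>supp f. if M = [] then f M else 0)"
    by (simp add: counit_def K_def lin_def)
  also have "\<dots> = f []" using assms by (simp add: H_Pack1_def sum.delta' supp_def)
  finally show ?thesis by (simp add: counit_def)
qed

lemma row_of_rconcat: "packed_row M1 \<Longrightarrow> packed_row M2 \<Longrightarrow> row_of (rconcat M1 M2) = row_of M1 @ row_of M2"
  by (auto simp: packed_row_def rconcat_def row_of_def)

lemma K_basis_rconcat:
  assumes "packed_row M1" "packed_row M2"
  shows "K_basis x y (rconcat M1 M2) = bilin diag (K_basis x y M1) (K_basis x y M2)"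
proof
  fix N
  let ?T1 = "packed_wt (sum_list (row_of M1))" and ?T2 = "packed_wt (sum_list (row_of M2))"
  have "K_basis x y (rconcat M1 M2) N = (\<Sum>N1\<in>?T1. \<Sum>N2\<in>?T2.
      if diag N1 N2 = N then K_basis x y M1 N1 * K_basis x y M2 N2 else 0)"
    unfolding K_basis_row_of row_of_rconcat[OF assms] by (rule K_row_append) (simp_all add: finite_packed_wt)
  also have "\<dots> = bilin diag (K_basis x y M1) (K_basis x y M2) N"
    by (rule bilin_sum[symmetric]) (simp_all add: finite_packed_wt supp_K_basis)
  finally show "K_basis x y (rconcat M1 M2) N = bilin diag (K_basis x y M1) (K_basis x y M2) N" .
qed

lemma K_mult:
  assumes "f \<in> H_Pack1" "g \<in> H_Pack1"
  shows "K x y (bilin rconcat f g) = bilin diag (K x y f) (K x y g)"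
  unfolding K_def using assms
  by (intro lin_bilin) (auto simp: H_Pack1_def finite_supp_K_basis K_basis_rconcat)

lemma row_of_pk: "row_of (pk [bs]) = filter (\<lambda>a. a \<noteq> 0) bs"
proof (cases "\<exists>a\<in>set bs. a \<noteq> 0")
  case True
  have "filter (\<lambda>j. \<exists>r'\<in>set [bs]. r' ! j \<noteq> 0) [0..<ncols [bs]] = filter (\<lambda>j. bs!j \<noteq> 0) [0..<length bs]"
    by (simp add: ncols_def)
  moreover have "map (\<lambda>j. bs!j) (filter (\<lambda>j. bs!j \<noteq> 0) [0..<length bs]) = filter (\<lambda>a. a \<noteq> 0) bs"
    by (subst filter_nth_map[of _ bs]) simp
  ultimately show ?thesis using True by (simp add: pk_def row_of_def)
next
  case False
  then have "filter (\<lambda>a. a \<noteq> 0) bs = []" by (simp add: filter_empty_conv)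
  then show ?thesis using False unfolding pk_def by (auto simp: row_of_def)
qed

lemma K_basis_pk_row: "K_basis x y (pk [bs]) = K_row x y bs"
  unfolding K_basis_row_of row_of_pk K_row_filter_nonzero ..

lemma decomp_row: "decomp [r] = (\<lambda>z. ([fst z], [snd z])) ` splits r"
proof (intro set_eqI iffI)
  fix w assume w: "w \<in> decomp [r]"
  obtain A B where ww: "w = (A,B)" by (cases w)
  have d: "length A = 1" "length B = 1" "\<forall>q\<in>set A. length q = length r" "\<forall>q\<in>set B. length q = length r"
      "\<forall>j<length r. A!0!j + B!0!j = r!j"
    using w by (auto simp: ww decomp_def nrows_def ncols_def)
  obtain bs cs where "A = [bs]" "B = [cs]" using d(1,2) by (metis One_nat_def length_0_conv length_Suc_conv)
  moreover have "(bs,cs) \<in> splits r" using d by (auto simp: splits_def \<open>A = [bs]\<close> \<open>B = [cs]\<close>)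
  ultimately show "w \<in> (\<lambda>z. ([fst z], [snd z])) ` splits r"
    by (intro image_eqI[of _ _ "(bs, cs)"]) (auto simp: ww)
next
  fix w assume "w \<in> (\<lambda>z. ([fst z], [snd z])) ` splits r"
  then show "w \<in> decomp [r]" by (auto simp: splits_def decomp_def nrows_def ncols_def)
qed

lemma cop_packed_row:
  assumes "packed_row M"
  shows "(\<Sum>z\<in>decomp M. K_basis x y (pk (fst z)) P * K_basis x y (pk (snd z)) Q)
    = (\<Sum>z\<in>splits (row_of M). K_row x y (fst z) P * K_row x y (snd z) Q)"
proof -
  consider "M = []" | r where "M = [r]" using assms by (auto simp: packed_row_def)
  then show ?thesis
  proof cases
    case 1
    then show ?thesis by (simp add: decomp_Nil splits_Nil row_of_def pk_def K_basis_def K_row_Nil)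
  next
    case 2
    have inj: "inj_on (\<lambda>z. ([fst z], [snd z])) (splits r)" by (auto simp: inj_on_def prod_eq_iff)
    show ?thesis unfolding 2 decomp_row sum.reindex[OF inj]
      by (simp add: row_of_def K_basis_pk_row)
  qed
qed

lemma coprod_K_basis:
  assumes "packed_row M"
  shows "coprod (K_basis x y M) = tensor_map (K_basis x y) (cop_basis M)"
proof
  fix w :: "mat \<times> mat"
  obtain P Q where w: "w = (P,Q)" by fastforce
  let ?pp = "\<lambda>z::mat \<times> mat. (pk (fst z), pk (snd z))"
  let ?U = "?pp ` decomp M"
  have "coprod (K_basis x y M) (P,Q) =
      (\<Sum>N\<in>packed_wt (sum_list (row_of M)). K_row x y (row_of M) N * cop_basis N (P,Q))"
    unfolding coprod_def by (subst lin_sum[OF finite_packed_wt supp_K_basis]) (simp add: K_basis_row_of)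
  also have "\<dots> = (\<Sum>z\<in>splits (row_of M). K_row x y (fst z) P * K_row x y (snd z) Q)"
    by (rule K_row_cop)
  also have "\<dots> = (\<Sum>z\<in>decomp M. (K_basis x y (fst (?pp z)) P * K_basis x y (snd (?pp z)) Q) * 1)"
    using cop_packed_row[OF assms] by simp
  also have "\<dots> = (\<Sum>v\<in>?U. (K_basis x y (fst v) P * K_basis x y (snd v) Q) *
      (\<Sum>z\<in>decomp M. if ?pp z = v then 1 else 0))"
    by (rule sum_fibres[symmetric]) (auto simp: finite_decomp)
  also have "\<dots> = tensor_map (K_basis x y) (cop_basis M) (P,Q)"
    unfolding tensor_map_def using supp_cop_basis finite_decomp
    by (subst lin_sum) (auto simp: cop_basis_eq_sum split_def mult.commute)
  finally show "coprod (K_basis x y M) w = tensor_map (K_basis x y) (cop_basis M) w" by (simp add: w)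
qed

lemma K_coprod:
  assumes f: "f \<in> H_Pack1"
  shows "coprod (K x y f) = tensor_map (K_basis x y) (coprod f)"
proof -
  have fin: "finite (supp f)" and rows: "\<And>M. M \<in> supp f \<Longrightarrow> packed_row M"
    using f by (auto simp: H_Pack1_def)
  have "coprod (K x y f) = lin (\<lambda>M. coprod (K_basis x y M)) f"
    unfolding coprod_def K_def using fin finite_supp_K_basis by (rule lin_lin)
  also have "\<dots> = lin (\<lambda>M. tensor_map (K_basis x y) (cop_basis M)) f"
    using rows coprod_K_basis by (blast intro: lin_cong)
  also have "\<dots> = tensor_map (K_basis x y) (coprod f)"
    unfolding coprod_def tensor_map_def using fin finite_supp_cop_basis by (rule lin_lin[symmetric])
  finally show ?thesis .
qed

theorem mainTheorem5:
  fixes x y :: rat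
  shows "(\<forall>f\<in>H_Pack1. K x y f \<in> H_Pack)
    \<and> K x y unit_el = unit_el
    \<and> (\<forall>f\<in>H_Pack1. \<forall>g\<in>H_Pack1. K x y (bilin rconcat f g) = bilin diag (K x y f) (K x y g))
    \<and> (\<forall>f\<in>H_Pack1. coprod (K x y f) = tensor_map (K_basis x y) (coprod f))
    \<and> (\<forall>f\<in>H_Pack1. counit (K x y f) = counit f)"
  using K_in_H_Pack K_unit K_mult K_coprod K_counit by blast

end
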